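(* Let $\mathcal M=\langle M,<,+,\{x\mapsto\lambda x\}_{\lambda\in\Lambda}\rangle$ be an ordered vector space over an ordered division ring $\Lambda$. Then every linear cell $C\subseteq M^n$ can be partitioned into finitely many product cells.
   Context: Let $\pi:M^n\to M^{n-1}$ be the projection onto the first $n-1$ coordinates; for $x\in M^n$ and $N\in M_{\ge0}$, $B_N(x)=x+[-N,N]^n$. A linear map on $X\subseteq M^n$ is one of the form $x\mapsto\lambda_1x_1+\dots+\lambda_nx_n+a$ ($\lambda_i\in\Lambda$, $a\in M$); $L(X)$ is the set of such maps and $L_\infty(X)=L(X)\cup\{\pm\infty\}$. Linear cells: $M^0$ is the linear cell in $M^0$; a linear cell in $M^{k+1}$ is either the graph $\Gamma(\alpha)$ of some $\alpha\in L(X)$ or a cylinder $(\alpha,\beta)=\{(x,y):x\in X,\alpha(x)<y<\beta(x)\}$ with $\alpha,\beta\in L_\infty(X)$, $\alpha<\beta$ on $X$, where $X\subseteq M^k$ is a linear cell. Purely unbounded sets $C\subseteq M^n$ (recursively): $C=M^0$ if $n=0$; for $n>0$, either $C$ is the graph of a function on $\pi(C)$ and $\pi(C)$ is purely unbounded, or $C$ is not such a graph, $\pi(C)$ is purely unbounded, and for every $N\in M_{\ge0}$ there is $x\in C$ with $C_{\pi(x)}\not\subseteq B_N(x_n)$, where $C_{\pi(x)}=\{t:(\pi(x),t)\in C\}$. A product cell is a linear cell $C$ of the form $C=J+D$ where $J$ is a purely unbounded linear cell, $D$ is a bounded linear cell, and every $c\in C$ can be written uniquely as $c=g+d$ with $g\in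 J$, $d\in D$. *)

theory Defs
  imports Main
begin

text \<open>Points of M^n are lists of length n.\<close>

definition ordered_vector_space ::
  "('k::{division_ring,linordered_ring_strict} \<Rightarrow> 'm::linordered_ab_group_add \<Rightarrow> 'm) \<Rightarrow> bool" where
  "ordered_vector_space sm \<longleftrightarrow>
     (\<forall>l x y. sm l (x + y) = sm l x + sm l y) \<and>
     (\<forall>l m x. sm (l + m) x = sm l x + sm m x) \<and>
     (\<forall>l m x. sm (l * m) x = sm l (sm m x)) \<and>
     (\<forall>x. sm 1 x = x) \<and>
     (\<forall>l x y. 0 < l \<longrightarrow> x < y \<longrightarrow> sm l x < sm l y)"

definition lf :: "('k \<Rightarrow> 'm::ab_group_add \<Rightarrow> 'm) \<Rightarrow> 'k list \<Rightarrow> 'm \<Rightarrow> 'm list \<Rightarrow> 'm" where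
  "lf sm ls a x = sum_list (map2 sm ls x) + a"

text \<open>Elements of L_infinity used as lower/upper bounds of cylinders:
None encodes -\<infinity> as a lower bound and +\<infinity> as an upper bound;
Some (ls, a) encodes the linear map lf sm ls a.  (A lower bound +\<infinity> or an
upper bound -\<infinity> can never satisfy alpha < beta, so nothing is lost.)\<close>
definition lower_ok :: "('k \<Rightarrow> 'm::linordered_ab_group_add \<Rightarrow> 'm) \<Rightarrow> ('k list \<times> 'm) option \<Rightarrow> 'm list \<Rightarrow> 'm \<Rightarrow> bool" where
  "lower_ok sm lo x t = (case lo of None \<Rightarrow> True | Some (ls, a) \<Rightarrow> lf sm ls a x < t)"

definition upper_ok :: "('k \<Rightarrow> 'm::linordered_ab_group_add \<Rightarrow> 'm) \<Rightarrow> ('k list \<times> 'm) option \<Rightarrow> 'm list \<Rightarrow> 'm \<Rightarrow> bool" where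
  "upper_ok sm hi x t = (case hi of None \<Rightarrow> True | Some (ls, a) \<Rightarrow> t < lf sm ls a x)"

definition bounds_lt :: "('k \<Rightarrow> 'm::linordered_ab_group_add \<Rightarrow> 'm) \<Rightarrow> ('k list \<times> 'm) option \<Rightarrow> ('k list \<times> 'm) option \<Rightarrow> 'm list \<Rightarrow> bool" where
  "bounds_lt sm lo hi x = (case (lo, hi) of
      (Some (l1, a1), Some (l2, a2)) \<Rightarrow> lf sm l1 a1 x < lf sm l2 a2 x
    | _ \<Rightarrow> True)"

inductive linear_cell :: "('k \<Rightarrow> 'm::linordered_ab_group_add \<Rightarrow> 'm) \<Rightarrow> nat \<Rightarrow> 'm list set \<Rightarrow> bool"
  for sm where
  zero: "linear_cell sm 0 {[]}"
| graph: "linear_cell sm k X \<Longrightarrow> length ls = k \<Longrightarrow>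
          linear_cell sm (Suc k) ((\<lambda>x. x @ [lf sm ls a x]) ` X)"
| cyl: "linear_cell sm k X \<Longrightarrow>
        (\<forall>(ls, a) \<in> set_option lo. length ls = k) \<Longrightarrow>
        (\<forall>(ls, a) \<in> set_option hi. length ls = k) \<Longrightarrow>
        (\<forall>x\<in>X. bounds_lt sm lo hi x) \<Longrightarrow>
        linear_cell sm (Suc k) {x @ [t] | x t. x \<in> X \<and> lower_ok sm lo x t \<and> upper_ok sm hi x t}"

definition fiber :: "'m list set \<Rightarrow> 'm list \<Rightarrow> 'm set" where
  "fiber C y = {t. y @ [t] \<in> C}"

definition is_graph :: "'m list set \<Rightarrow> bool" where
  "is_graph C \<longleftrightarrow> (\<forall>x\<in>C. \<forall>y\<in>C. butlast x = butlast y \<longrightarrow> x = y)"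

fun purely_unbounded :: "nat \<Rightarrow> 'm::linordered_ab_group_add list set \<Rightarrow> bool" where
  "purely_unbounded 0 C = (C = {[]})"
| "purely_unbounded (Suc n) C =
     ((\<forall>x\<in>C. length x = Suc n) \<and>
      ((is_graph C \<and> purely_unbounded n (butlast ` C)) \<or>
       (\<not> is_graph C \<and> purely_unbounded n (butlast ` C) \<and>
        (\<forall>N\<ge>0. \<exists>x\<in>C. \<not> fiber C (butlast x) \<subseteq> {last x - N .. last x + N}))))"

definition bounded_set :: "nat \<Rightarrow> 'm::linordered_ab_group_add list set \<Rightarrow> bool" where
  "bounded_set n D \<longleftrightarrow> (\<forall>d\<in>D. length d = n) \<and> (\<exists>N. \<forall>d\<in>D. \<forall>t\<in>set d. - N \<le> t \<and> t \<le> N)"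

definition msum :: "'m::ab_group_add list set \<Rightarrow> 'm list set \<Rightarrow> 'm list set" where
  "msum J D = {map2 (+) g d | g d. g \<in> J \<and> d \<in> D}"

definition product_cell :: "('k \<Rightarrow> 'm::linordered_ab_group_add \<Rightarrow> 'm) \<Rightarrow> nat \<Rightarrow> 'm list set \<Rightarrow> bool" where
  "product_cell sm n C \<longleftrightarrow> linear_cell sm n C \<and>
     (\<exists>J D. linear_cell sm n J \<and> purely_unbounded n J \<and>
            linear_cell sm n D \<and> bounded_set n D \<and>
            C = msum J D \<and>
            (\<forall>c\<in>C. \<exists>!p. fst p \<in> J \<and> snd p \<in> D \<and> c = map2 (+) (fst p) (snd p)))"

end

theory Submission
  imports Defs
begin

(*
  A linear cell arises from a point by repeatedly adding a coordinate, either as a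
  graph t = f x or as a cylinder f1 x < t < f2 x (bounds possibly absent).  It therefore suffices
  to partition such a one-coordinate extension of a product cell A = J + D.  We keep the extra
  invariant that the J-component G x of a point x of A depends affinely on x; then every affine f
  splits on A as f x = f0 (G x) + f (x - G x), with f0 the linear part of f.

  A graph over A is the sum of the graph of f0 over J and of the graph of f over D, and a ray or a
  line over A is the sum of a ray or line over J and a graph over D.  For a band f1 < t < f2 the
  width splits as p (G x) + q (x - G x) with p affine on J and q affine on D.  Affine functions on
  cells that are bounded below have an infimum c in M; cells are relatively open, so p either
  attains c and is constant, or stays above c, and then p is unbounded on J because affine
  functions bounded on purely unbounded cells are constant.  Likewise c + q is either 0 or
  positive on D.  Accordingly the band is a single product cell, or is cut along the graph of
  m = f2_0 (G x) - c + f1 (x - G x) into three product cells whose J-fibres are either graphs or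
  unbounded in length, and whose D-fibres are bounded.
*)

section \<open>Points extended by one coordinate\<close>

lemma map2_add_diff_cancel:
  "length g = length d \<Longrightarrow> map2 (-) (map2 (+) g d) g = (d::'a::ab_group_add list)"
  by (induction g d rule: list_induct2) auto

lemma snoc_butlast_last: "length y = Suc k \<Longrightarrow> butlast y @ [last y] = y"
  by (cases y rule: rev_cases) simp_all

definition Sigma_snoc :: "'a list set \<Rightarrow> ('a list \<Rightarrow> 'a \<Rightarrow> bool) \<Rightarrow> 'a list set" where
  "Sigma_snoc X P = {x @ [t] | x t. x \<in> X \<and> P x t}"

lemma snoc_in_Sigma_snoc [simp]: "x @ [t] \<in> Sigma_snoc X P \<longleftrightarrow> x \<in> X \<and> P x t"
  unfolding Sigma_snoc_def by auto

lemma Sigma_snocE: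
  assumes "z \<in> Sigma_snoc X P"
  obtains x t where "z = x @ [t]" "x \<in> X" "P x t"
  using assms unfolding Sigma_snoc_def by blast

lemma ball_Sigma_snoc: "(\<forall>z\<in>Sigma_snoc X P. Q z) \<longleftrightarrow> (\<forall>x\<in>X. \<forall>t. P x t \<longrightarrow> Q (x @ [t]))"
  by (auto elim!: Sigma_snocE)

lemma Sigma_snoc_cong: "(\<And>x t. x \<in> X \<Longrightarrow> P x t \<longleftrightarrow> Q x t) \<Longrightarrow> Sigma_snoc X P = Sigma_snoc X Q"
  by (auto elim!: Sigma_snocE)

lemma butlast_Sigma_snoc:
  assumes "\<And>x. x \<in> X \<Longrightarrow> \<exists>t. P x t"
  shows "butlast ` Sigma_snoc X P = X"
proof
  show "X \<subseteq> butlast ` Sigma_snoc X P"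
  proof
    fix x
    assume "x \<in> X"
    with assms obtain t where "x @ [t] \<in> Sigma_snoc X P"
      by auto
    then show "x \<in> butlast ` Sigma_snoc X P"
      by (metis butlast_snoc image_eqI)
  qed
qed (auto elim!: Sigma_snocE)

lemma Sigma_snoc_graph: "Sigma_snoc X (\<lambda>x t. t = g x) = (\<lambda>x. x @ [g x]) ` X"
  unfolding Sigma_snoc_def by auto

lemma image_Sigma_snoc:
  assumes "\<And>x t. x \<in> X \<Longrightarrow> f (x @ [t]) = F x t"
  shows "f ` Sigma_snoc X P = (\<Union>x\<in>X. {F x t | t. P x t})"
  using assms unfolding Sigma_snoc_def by (auto simp: image_iff) (metis (mono_tags))

lemma Sigma_snoc_UN: "Sigma_snoc (\<Union>\<A>) P = (\<Union>A\<in>\<A>. Sigma_snoc A P)"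
  by (auto elim!: Sigma_snocE)

lemma Sigma_snoc_Int: "Sigma_snoc A P \<inter> Sigma_snoc B Q = Sigma_snoc (A \<inter> B) (\<lambda>x t. P x t \<and> Q x t)"
  by (auto elim!: Sigma_snocE)

lemma Sigma_snoc_Un: "Sigma_snoc X (\<lambda>x t. P x t \<or> Q x t) = Sigma_snoc X P \<union> Sigma_snoc X Q"
  by (auto elim!: Sigma_snocE)

lemma length_Sigma_snoc: "(\<And>x. x \<in> X \<Longrightarrow> length x = k) \<Longrightarrow> z \<in> Sigma_snoc X P \<Longrightarrow> length z = Suc k"
  by (auto elim!: Sigma_snocE)

lemma ex_add_right_eq_iff: "(\<exists>s. P s \<and> t = s + c) \<longleftrightarrow> P (t - (c::'a::ab_group_add))"
proof
  assume "P (t - c)"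
  then show "\<exists>s. P s \<and> t = s + c"
    by (intro exI[of _ "t - c"]) simp
qed auto

lemma ex_add_left_eq_iff: "(\<exists>s. P s \<and> t = c + s) \<longleftrightarrow> P (t - (c::'a::ab_group_add))"
  using ex_add_right_eq_iff[of P t c] by (simp add: add.commute)

(* Optional bounds of a fibre; None stands for -\<infinity> resp. +\<infinity>. *)
definition between :: "('a \<Rightarrow> 'b::order) option \<Rightarrow> ('a \<Rightarrow> 'b) option \<Rightarrow> 'a \<Rightarrow> 'b \<Rightarrow> bool" where
  "between Lo Hi x t \<longleftrightarrow> (\<forall>l\<in>set_option Lo. l x < t) \<and> (\<forall>u\<in>set_option Hi. t < u x)"

definition bounds_ordered :: "('a \<Rightarrow> 'b::order) option \<Rightarrow> ('a \<Rightarrow> 'b) option \<Rightarrow> 'a \<Rightarrow> bool" where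
  "bounds_ordered Lo Hi x \<longleftrightarrow> (\<forall>l\<in>set_option Lo. \<forall>u\<in>set_option Hi. l x < u x)"

lemma between_imp_bounds_ordered: "between Lo Hi x t \<Longrightarrow> bounds_ordered Lo Hi x"
  unfolding between_def bounds_ordered_def by (meson order.strict_trans)

lemma between_map_option_cong:
  "(\<And>f. f \<in> set_option Lo \<union> set_option Hi \<Longrightarrow> g f x = f x) \<Longrightarrow>
    between (map_option g Lo) (map_option g Hi) x t \<longleftrightarrow> between Lo Hi x t"
  by (cases Lo; cases Hi) (simp_all add: between_def)

lemma bounds_ordered_map_option_cong:
  "(\<And>f. f \<in> set_option Lo \<union> set_option Hi \<Longrightarrow> g f x = f x) \<Longrightarrow>
    bounds_ordered (map_option g Lo) (map_option g Hi) x \<longleftrightarrow> bounds_ordered Lo Hi x"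
  by (cases Lo; cases Hi) (simp_all add: bounds_ordered_def)

lemma between_diff_iff:
  "between Lo Hi (F x) (t - c x) \<longleftrightarrow>
    between (map_option (\<lambda>l y. l (F y) + c y) Lo) (map_option (\<lambda>u y. u (F y) + c y) Hi) x
      (t::'b::ordered_ab_group_add)"
  by (cases Lo; cases Hi) (simp_all add: between_def less_diff_eq diff_less_eq)

definition is_inf :: "'a::linorder set \<Rightarrow> 'a \<Rightarrow> bool" where
  "is_inf S c \<longleftrightarrow> (\<forall>s\<in>S. c \<le> s) \<and> (\<forall>v. c < v \<longrightarrow> (\<exists>s\<in>S. s < v))"

lemma is_inf_greatest: "is_inf S c \<Longrightarrow> (\<And>s. s \<in> S \<Longrightarrow> b \<le> s) \<Longrightarrow> b \<le> c"
  unfolding is_inf_def by (meson leD le_less_linear)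

lemma is_inf_UN: "is_inf (h ` X) c \<Longrightarrow> (\<And>x. x \<in> X \<Longrightarrow> is_inf (S x) (h x)) \<Longrightarrow> is_inf (\<Union>x\<in>X. S x) c"
  unfolding is_inf_def by (fastforce intro: order.trans)

lemma is_inf_sum_nonneg:
  assumes "is_inf (p ` J) c" "\<forall>g\<in>J. \<forall>d\<in>D. 0 < p g + q d" "d \<in> D"
  shows "0 \<le> c + (q d :: 'a::linordered_ab_group_add)"
proof (rule ccontr)
  assume "\<not> 0 \<le> c + q d"
  then have "c < - q d"
    using add_less_cancel_right[of c "q d" "- q d"] by (simp add: not_le)
  with assms(1) obtain g where "g \<in> J" "p g < - q d"
    unfolding is_inf_def by blast
  with assms(2,3) show False
    using add_less_cancel_right[of "p g" "q d" "- q d"] by fastforce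
qed

definition partitions :: "'a set set \<Rightarrow> 'a set \<Rightarrow> bool" where
  "partitions P X \<longleftrightarrow> finite P \<and> \<Union>P = X \<and> pairwise disjnt P"

lemma partitions_singleton: "partitions {X} X"
  by (simp add: partitions_def)

lemma partitions_Sigma_snoc:
  assumes "partitions P X" and "\<forall>A\<in>P. \<exists>Q. partitions Q (Sigma_snoc A R) \<and> (\<forall>B\<in>Q. S B)"
  shows "\<exists>Q. partitions Q (Sigma_snoc X R) \<and> (\<forall>B\<in>Q. S B)"
proof -
  obtain Q where Q: "\<And>A. A \<in> P \<Longrightarrow> partitions (Q A) (Sigma_snoc A R) \<and> (\<forall>B\<in>Q A. S B)"
    using assms(2) by metis
  have disj: "pairwise disjnt (\<Union>A\<in>P. Q A)"
  proof (rule pairwiseI)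
    fix B1 B2
    assume "B1 \<in> (\<Union>A\<in>P. Q A)" "B2 \<in> (\<Union>A\<in>P. Q A)" "B1 \<noteq> B2"
    then obtain A1 A2 where A: "A1 \<in> P" "B1 \<in> Q A1" "A2 \<in> P" "B2 \<in> Q A2"
      by blast
    show "disjnt B1 B2"
    proof (cases "A1 = A2")
      case True
      with A Q[of A1] \<open>B1 \<noteq> B2\<close> show ?thesis
        unfolding partitions_def by (auto dest: pairwiseD)
    next
      case False
      with A assms(1) have "A1 \<inter> A2 = {}"
        unfolding partitions_def pairwise_def disjnt_def by blast
      then have "Sigma_snoc A1 R \<inter> Sigma_snoc A2 R = {}"
        by (auto simp: Sigma_snoc_Int elim!: Sigma_snocE)
      with A Q[of A1] Q[of A2] show ?thesis
        unfolding partitions_def disjnt_def by blast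
    qed
  qed
  have "\<Union>(\<Union>A\<in>P. Q A) = (\<Union>A\<in>P. \<Union>(Q A))"
    by blast
  also have "\<dots> = (\<Union>A\<in>P. Sigma_snoc A R)"
    using Q by (simp add: partitions_def)
  also have "\<dots> = Sigma_snoc X R"
    using assms(1) Sigma_snoc_UN[of P R] by (simp add: partitions_def)
  finally have "\<Union>(\<Union>A\<in>P. Q A) = Sigma_snoc X R" .
  with disj show ?thesis
    using assms(1) Q unfolding partitions_def by (intro exI[of _ "\<Union>A\<in>P. Q A"]) auto
qed

lemma partitions_Sigma_between_split:
  assumes "\<forall>x\<in>X. l x < m x \<and> m x < u x"
  shows "partitions {Sigma_snoc X (between (Some l) (Some m)), Sigma_snoc X (\<lambda>x t. t = m x),
      Sigma_snoc X (between (Some m) (Some u))} (Sigma_snoc X (between (Some l) (Some (u::'a list \<Rightarrow> 'a::linorder))))"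
proof -
  have "Sigma_snoc X (between (Some l) (Some u)) =
      Sigma_snoc X (\<lambda>x t. between (Some l) (Some m) x t \<or> t = m x \<or> between (Some m) (Some u) x t)"
    using assms by (intro Sigma_snoc_cong) (auto simp: between_def)
  moreover have "pairwise disjnt {Sigma_snoc X (between (Some l) (Some m)), Sigma_snoc X (\<lambda>x t. t = m x),
      Sigma_snoc X (between (Some m) (Some u))}"
    unfolding pairwise_def disjnt_def by (auto simp: Sigma_snoc_Int between_def elim!: Sigma_snocE)
  ultimately show ?thesis
    unfolding partitions_def by (simp add: Sigma_snoc_Un Un_assoc)
qed

definition wide_fibres :: "'a::linordered_ab_group_add list set \<Rightarrow> bool" where
  "wide_fibres C \<longleftrightarrow> (\<forall>N\<ge>0. \<exists>y s1 s2. y @ [s1] \<in> C \<and> y @ [s2] \<in> C \<and> s1 + N < s2)"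

lemma purely_unbounded_Suc_iff:
  "purely_unbounded (Suc k) C \<longleftrightarrow>
    (\<forall>x\<in>C. length x = Suc k) \<and> purely_unbounded k (butlast ` C) \<and> (is_graph C \<or> wide_fibres C)"
proof -
  have "(\<forall>N\<ge>0. \<exists>x\<in>C. \<not> fiber C (butlast x) \<subseteq> {last x - N..last x + N}) \<longleftrightarrow> wide_fibres C"
    if len: "\<forall>x\<in>C. length x = Suc k"
  proof
    assume long: "\<forall>N\<ge>0. \<exists>x\<in>C. \<not> fiber C (butlast x) \<subseteq> {last x - N..last x + N}"
    show "wide_fibres C"
      unfolding wide_fibres_def
    proof (intro allI impI)
      fix N :: 'a
      assume "0 \<le> N"
      with long obtain x t where x: "x \<in> C" "butlast x @ [t] \<in> C" "t \<notin> {last x - N..last x + N}"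
        unfolding fiber_def by blast
      then have "butlast x @ [last x] \<in> C"
        using len snoc_butlast_last by metis
      moreover have "t + N < last x \<or> last x + N < t"
        using x(3) by (auto simp: not_le less_diff_eq)
      ultimately show "\<exists>y s1 s2. y @ [s1] \<in> C \<and> y @ [s2] \<in> C \<and> s1 + N < s2"
        using x(2) by blast
    qed
  next
    assume "wide_fibres C"
    show "\<forall>N\<ge>0. \<exists>x\<in>C. \<not> fiber C (butlast x) \<subseteq> {last x - N..last x + N}"
    proof (intro allI impI)
      fix N :: 'a
      assume "0 \<le> N"
      with \<open>wide_fibres C\<close> obtain y s1 s2 where "y @ [s1] \<in> C" "y @ [s2] \<in> C" "s1 + N < s2"
        unfolding wide_fibres_def by blast
      then have "s2 \<in> fiber C (butlast (y @ [s1]))" "s2 \<notin> {last (y @ [s1]) - N..last (y @ [s1]) + N}"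
        by (simp_all add: fiber_def not_le)
      with \<open>y @ [s1] \<in> C\<close> show "\<exists>x\<in>C. \<not> fiber C (butlast x) \<subseteq> {last x - N..last x + N}"
        by blast
    qed
  qed
  then show ?thesis
    by auto
qed

lemma purely_unbounded_butlast: "purely_unbounded (Suc k) C \<Longrightarrow> purely_unbounded k (butlast ` C)"
  using purely_unbounded_Suc_iff[of k C] by blast

lemma purely_unbounded_Sigma_snoc_base:
  assumes "purely_unbounded (Suc k) (Sigma_snoc X P)" "\<And>x. x \<in> X \<Longrightarrow> \<exists>t. P x t"
  shows "purely_unbounded k X"
  using purely_unbounded_butlast[OF assms(1)] butlast_Sigma_snoc[OF assms(2)] by simp

lemma purely_unbounded_wide_fibres: "purely_unbounded (Suc k) C \<Longrightarrow> \<not> is_graph C \<Longrightarrow> wide_fibres C"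
  using purely_unbounded_Suc_iff[of k C] by blast

lemma purely_unbounded_Sigma_wide:
  assumes "purely_unbounded k X" "\<And>x. x \<in> X \<Longrightarrow> length x = k"
    and "\<And>x. x \<in> X \<Longrightarrow> \<exists>t. P x t" "is_graph (Sigma_snoc X P) \<or> wide_fibres (Sigma_snoc X P)"
  shows "purely_unbounded (Suc k) (Sigma_snoc X P)"
proof -
  have "butlast ` Sigma_snoc X P = X"
    using assms(3) by (rule butlast_Sigma_snoc)
  moreover have "\<forall>z\<in>Sigma_snoc X P. length z = Suc k"
    using assms(2) length_Sigma_snoc by blast
  ultimately show ?thesis
    unfolding purely_unbounded_Suc_iff using assms(1,4) by simp
qed

lemma purely_unbounded_Sigma_graph:
  assumes "purely_unbounded k X" "\<And>x. x \<in> X \<Longrightarrow> length x = k"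
  shows "purely_unbounded (Suc k) (Sigma_snoc X (\<lambda>x t. t = f x))"
proof (rule purely_unbounded_Sigma_wide[OF assms])
  show "\<exists>t. t = f x" for x
    by simp
  show "is_graph (Sigma_snoc X (\<lambda>x t. t = f x)) \<or> wide_fibres (Sigma_snoc X (\<lambda>x t. t = f x))"
    unfolding is_graph_def by (auto elim!: Sigma_snocE)
qed

lemma purely_unbounded_zero_point: "purely_unbounded n {replicate n (0::'a::linordered_ab_group_add)}"
proof (induction n)
  case (Suc n)
  have "replicate (Suc n) (0::'a) = replicate n 0 @ [0]"
    by (simp add: replicate_append_same)
  with Suc show ?case
    by (subst purely_unbounded_Suc_iff) (simp add: is_graph_def)
qed simp

lemma bounded_set_Sigma_snoc:
  assumes "bounded_set k D" and "\<And>d s. d \<in> D \<Longrightarrow> P d s \<Longrightarrow> - B \<le> s \<and> s \<le> B"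
  shows "bounded_set (Suc k) (Sigma_snoc D P)"
proof -
  obtain N where N: "\<forall>d\<in>D. \<forall>t\<in>set d. - N \<le> t \<and> t \<le> N" and len: "\<forall>d\<in>D. length d = k"
    using assms(1) unfolding bounded_set_def by blast
  have "- max N B \<le> - N" "- max N B \<le> - B" "N \<le> max N B" "B \<le> max N B"
    by simp_all
  then have "- max N B \<le> t \<and> t \<le> max N B" if "- N \<le> t \<and> t \<le> N \<or> - B \<le> t \<and> t \<le> B" for t
    using that by (meson order_trans)
  with N len assms(2) show ?thesis
    unfolding bounded_set_def by (intro conjI exI[of _ "max N B"]) (auto elim!: Sigma_snocE)
qed

lemma linear_cell_length: "linear_cell sm n C \<Longrightarrow> x \<in> C \<Longrightarrow> length x = n"
  by (induction arbitrary: x rule: linear_cell.induct) auto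

section \<open>Ordered vector spaces and affine functions\<close>

lemma ordered_division_ring_zero_less_one: "(0::'k::{division_ring,linordered_ring_strict}) < 1"
  using zero_le_square[of "1::'k"] by (simp add: order_less_le)

lemma ordered_division_ring_inverse_pos:
  assumes "0 < (l::'k::{division_ring,linordered_ring_strict})"
  shows "0 < inverse l"
proof (rule ccontr)
  assume "\<not> 0 < inverse l"
  then have "l * inverse l \<le> 0"
    using assms by (intro mult_nonneg_nonpos) simp_all
  then show False
    using assms ordered_division_ring_zero_less_one[where 'k='k] by simp
qed

lemma ordered_division_ring_inverse_neg:
  "(l::'k::{division_ring,linordered_ring_strict}) < 0 \<Longrightarrow> inverse l < 0"
  using ordered_division_ring_inverse_pos[of "- l"] by simp

locale ordered_vspace =
  fixes sm :: "'k::{division_ring,linordered_ring_strict} \<Rightarrow> 'm::linordered_ab_group_add \<Rightarrow> 'm"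
  assumes ordered_vector_space: "ordered_vector_space sm"
begin

lemma sm_add_right: "sm l (x + y) = sm l x + sm l y"
  and sm_add_left: "sm (l + m) x = sm l x + sm m x"
  and sm_mult: "sm (l * m) x = sm l (sm m x)"
  and sm_one [simp]: "sm 1 x = x"
  and sm_strict_mono: "0 < l \<Longrightarrow> x < y \<Longrightarrow> sm l x < sm l y"
  using ordered_vector_space unfolding ordered_vector_space_def by blast+

lemma sm_zero_left [simp]: "sm 0 x = 0"
  using sm_add_left[of 0 0 x] by simp

lemma sm_zero_right [simp]: "sm l 0 = 0"
  using sm_add_right[of l 0 0] by simp

lemma sm_minus_right: "sm l (- x) = - sm l x"
  using sm_add_right[of l x "- x"] by (simp add: eq_neg_iff_add_eq_0 add.commute)

lemma sm_minus_left: "sm (- l) x = - sm l x"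
  using sm_add_left[of l "- l" x] by (simp add: eq_neg_iff_add_eq_0 add.commute)

lemma sm_diff_right: "sm l (x - y) = sm l x - sm l y"
  using sm_add_right[of l x "- y"] by (simp add: sm_minus_right)

lemma sm_inverse [simp]: "l \<noteq> 0 \<Longrightarrow> sm l (sm (inverse l) x) = x"
  using sm_mult[of l "inverse l" x] by simp

lemma sm_strict_antimono: "l < 0 \<Longrightarrow> x < y \<Longrightarrow> sm l y < sm l x"
  using sm_strict_mono[of "- l" x y] by (simp add: sm_minus_left)

lemma sm_pos: "0 < l \<Longrightarrow> 0 < x \<Longrightarrow> 0 < sm l x"
  using sm_strict_mono[of l 0 x] by simp

lemma sm_neg: "l < 0 \<Longrightarrow> 0 < x \<Longrightarrow> sm l x < 0"
  using sm_strict_antimono[of l 0 x] by simp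

lemma sm_mono: "0 \<le> l \<Longrightarrow> x \<le> y \<Longrightarrow> sm l x \<le> sm l y"
  by (cases "l = 0"; cases "x = y") (auto intro!: less_imp_le sm_strict_mono)

lemma exists_between: "(x::'m) < y \<Longrightarrow> \<exists>z. x < z \<and> z < y"
proof -
  assume "x < y"
  define h where "h = sm (inverse (1 + 1)) (y - x)"
  have two: "(0::'k) < 1 + 1"
    using ordered_division_ring_zero_less_one by (rule add_pos_pos) (rule ordered_division_ring_zero_less_one)
  have "h + h = sm (inverse (1 + 1) + inverse (1 + 1)) (y - x)"
    by (simp add: h_def sm_add_left)
  also have "inverse (1 + 1) + inverse (1 + 1) = (1::'k)"
    using two by (metis distrib_right mult_1_left less_irrefl right_inverse)
  finally have "x + h + h = y" by (simp add: algebra_simps)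
  moreover have "0 < h"
    unfolding h_def using \<open>x < y\<close> two by (intro sm_pos ordered_division_ring_inverse_pos) simp_all
  ultimately show ?thesis
    by (metis add_strict_left_mono add.right_neutral)
qed

lemma sm_unbounded:
  assumes "a \<noteq> 0"
  shows "\<exists>N\<ge>0. \<forall>d. N < d \<longrightarrow> B < sm a d \<or> sm a d < - B"
proof (cases "0 < a")
  case True
  have "B < sm a d" if "max 0 (sm (inverse a) B) < d" for d
    using sm_strict_mono[OF True, of "sm (inverse a) B" d] that assms by simp
  then show ?thesis
    by (intro exI[of _ "max 0 (sm (inverse a) B)"]) auto
next
  case False
  with assms have "a < 0" by simp
  have "sm a d < - B" if "max 0 (sm (inverse a) (- B)) < d" for d
    using sm_strict_antimono[OF \<open>a < 0\<close>, of "sm (inverse a) (- B)" d] that assms by simp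
  then show ?thesis
    by (intro exI[of _ "max 0 (sm (inverse a) (- B))"]) auto
qed

lemma sm_zero_if_bounded_on_wide_fibres:
  fixes K :: "'m list set"
  assumes "wide_fibres K" and bounded: "\<And>y s. y @ [s] \<in> K \<Longrightarrow> lo \<le> b y + sm a s \<and> b y + sm a s \<le> hi"
  shows "a = 0"
proof (rule ccontr)
  assume "a \<noteq> 0"
  then obtain N where "0 \<le> N" and N: "\<forall>d. N < d \<longrightarrow> hi - lo < sm a d \<or> sm a d < - (hi - lo)"
    using sm_unbounded[of a "hi - lo"] by blast
  with assms(1) obtain y s1 s2 where s: "y @ [s1] \<in> K" "y @ [s2] \<in> K" "s1 + N < s2"
    unfolding wide_fibres_def by blast
  from bounded[OF s(1)] bounded[OF s(2)]
  have "lo \<le> b y + sm a s1" "b y + sm a s1 \<le> hi" "lo \<le> b y + sm a s2" "b y + sm a s2 \<le> hi"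
    by simp_all
  then have "b y + sm a s2 - (b y + sm a s1) \<le> hi - lo" "lo - hi \<le> b y + sm a s2 - (b y + sm a s1)"
    by (simp_all only: diff_mono)
  moreover have "N < s2 - s1"
    using s(3) by (simp add: less_diff_eq add.commute)
  then have "hi - lo < sm a s2 - sm a s1 \<or> sm a s2 - sm a s1 < - (hi - lo)"
    using N[rule_format, of "s2 - s1"] by (simp add: sm_diff_right)
  ultimately show False
    by (auto simp: algebra_simps)
qed

lemma lf_Nil [simp]: "lf sm [] a x = a" "lf sm ls a [] = a"
  by (simp_all add: lf_def)

lemma lf_Cons: "lf sm (l # ls) a (y # ys) = sm l y + lf sm ls a ys"
  by (simp add: lf_def add.assoc)

lemma lf_snoc: "length ls = length x \<Longrightarrow> lf sm (ls @ [c]) a (x @ [t]) = lf sm ls a x + sm c t"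
  by (simp add: lf_def algebra_simps)

lemma lf_const: "lf sm ls a x = lf sm ls 0 x + a"
  by (simp add: lf_def)

lemma lf_replicate_zero: "lf sm ls a (replicate (length ls) 0) = a"
  by (induction ls) (simp_all add: lf_Cons)

lemma lf_zero_coeffs: "lf sm (replicate k 0) a x = a"
proof (induction k arbitrary: x)
  case (Suc k)
  then show ?case
    by (cases x) (simp_all add: lf_Cons)
qed simp

lemma lf_add_coeffs:
  "length ls = length ms \<Longrightarrow> lf sm (map2 (+) ls ms) (a + b) x = lf sm ls a x + lf sm ms b x"
proof (induction ls ms arbitrary: x rule: list_induct2)
  case (Cons l ls m ms)
  then show ?case
    by (cases x) (simp_all add: lf_Cons sm_add_left algebra_simps)
qed simp

lemma lf_scale_coeffs: "lf sm (map (\<lambda>m. l * m) ls) (sm l a) x = sm l (lf sm ls a x)"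
proof (induction ls arbitrary: x)
  case (Cons m ls)
  then show ?case
    by (cases x) (simp_all add: lf_Cons sm_add_right sm_mult)
qed simp

lemma lf_map2_add:
  "length ls = length g \<Longrightarrow> length g = length d \<Longrightarrow>
    lf sm ls a (map2 (+) g d) = lf sm ls 0 g + lf sm ls a d"
proof (induction ls arbitrary: g d)
  case (Cons l ls)
  then obtain y g' z d' where "g = y # g'" "d = z # d'"
    by (metis Suc_length_conv)
  with Cons show ?case
    by (simp add: lf_Cons sm_add_right algebra_simps)
qed simp

lemma lf_as_sum:
  "length ls = k \<Longrightarrow> length x = k \<Longrightarrow> lf sm ls a x = (\<Sum>i<k. sm (ls ! i) (x ! i)) + a"
  by (simp add: lf_def sum_list_sum_nth atLeast0LessThan)

definition affine_fun :: "nat \<Rightarrow> ('m list \<Rightarrow> 'm) \<Rightarrow> bool" where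
  "affine_fun k f \<longleftrightarrow> (\<exists>ls a. length ls = k \<and> (\<forall>x. length x = k \<longrightarrow> f x = lf sm ls a x))"

lemma affine_fun_lf: "length ls = k \<Longrightarrow> affine_fun k (lf sm ls a)"
  unfolding affine_fun_def by blast

lemma affine_fun_cong: "affine_fun k f \<Longrightarrow> (\<And>x. length x = k \<Longrightarrow> f x = g x) \<Longrightarrow> affine_fun k g"
  unfolding affine_fun_def by metis

lemma affine_fun_const: "affine_fun k (\<lambda>x. c)"
  unfolding affine_fun_def by (metis length_replicate lf_zero_coeffs)

lemma affine_fun_add:
  assumes "affine_fun k f" "affine_fun k g"
  shows "affine_fun k (\<lambda>x. f x + g x)"
proof -
  obtain ls a ms b where f: "length ls = k" "\<forall>x. length x = k \<longrightarrow> f x = lf sm ls a x"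
    and g: "length ms = k" "\<forall>x. length x = k \<longrightarrow> g x = lf sm ms b x"
    using assms unfolding affine_fun_def by blast
  then show ?thesis
    unfolding affine_fun_def by (intro exI[of _ "map2 (+) ls ms"] exI[of _ "a + b"]) (simp add: lf_add_coeffs)
qed

lemma affine_fun_scale:
  assumes "affine_fun k f"
  shows "affine_fun k (\<lambda>x. sm l (f x))"
proof -
  obtain ls a where f: "length ls = k" "\<forall>x. length x = k \<longrightarrow> f x = lf sm ls a x"
    using assms unfolding affine_fun_def by blast
  then show ?thesis
    unfolding affine_fun_def by (intro exI[of _ "map (\<lambda>m. l * m) ls"] exI[of _ "sm l a"]) (simp add: lf_scale_coeffs)
qed

lemma affine_fun_minus: "affine_fun k f \<Longrightarrow> affine_fun k (\<lambda>x. - f x)"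
  using affine_fun_scale[of k f "- 1"] by (simp add: sm_minus_left)

lemma affine_fun_diff: "affine_fun k f \<Longrightarrow> affine_fun k g \<Longrightarrow> affine_fun k (\<lambda>x. f x - g x)"
  using affine_fun_add[OF _ affine_fun_minus] by simp

lemma affine_fun_sum:
  "finite I \<Longrightarrow> (\<And>i. i \<in> I \<Longrightarrow> affine_fun k (f i)) \<Longrightarrow> affine_fun k (\<lambda>x. \<Sum>i\<in>I. f i x)"
  by (induction I rule: finite_induct) (simp_all add: affine_fun_const affine_fun_add)

lemma affine_fun_snoc_split:
  assumes "affine_fun (Suc k) f"
  shows "\<exists>f0 a. affine_fun k f0 \<and> (\<forall>x t. length x = k \<longrightarrow> f (x @ [t]) = f0 x + sm a t)"
proof -
  obtain ls a where f: "length ls = Suc k" "\<forall>x. length x = Suc k \<longrightarrow> f x = lf sm ls a x"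
    using assms unfolding affine_fun_def by blast
  have "f (x @ [t]) = lf sm (butlast ls) a x + sm (last ls) t" if "length x = k" for x t
    using f that lf_snoc[of "butlast ls" x "last ls" a t] by (simp add: snoc_butlast_last)
  moreover have "affine_fun k (lf sm (butlast ls) a)"
    using f by (intro affine_fun_lf) simp
  ultimately show ?thesis
    by blast
qed

lemma affine_fun_butlast:
  assumes "affine_fun k f"
  shows "affine_fun (Suc k) (\<lambda>y. f (butlast y))"
proof -
  obtain ls a where f: "length ls = k" "\<forall>x. length x = k \<longrightarrow> f x = lf sm ls a x"
    using assms unfolding affine_fun_def by blast
  have "f (butlast y) = lf sm (ls @ [0]) a y" if "length y = Suc k" for y
    using f that lf_snoc[of ls "butlast y" 0 a "last y"] by (simp add: snoc_butlast_last)
  with f show ?thesis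
    unfolding affine_fun_def by (intro exI[of _ "ls @ [0]"] exI[of _ a]) simp
qed

lemma affine_fun_last: "affine_fun (Suc k) last"
proof -
  have "last y = lf sm (replicate k 0 @ [1]) 0 y" if "length y = Suc k" for y :: "'m list"
    using that lf_snoc[of "replicate k 0" "butlast y" 1 0 "last y"]
    by (simp add: snoc_butlast_last lf_zero_coeffs)
  then show ?thesis
    unfolding affine_fun_def by (intro exI[of _ "replicate k 0 @ [1]"] exI[of _ 0]) simp
qed

lemma affine_fun_nth: "i < k \<Longrightarrow> affine_fun k (\<lambda>x. x ! i)"
proof (induction k)
  case (Suc k)
  show ?case
  proof (cases "i < k")
    case True
    from affine_fun_butlast[OF Suc.IH[OF True]] show ?thesis
      by (rule affine_fun_cong) (simp add: nth_butlast True)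
  next
    case False
    then have "i = k"
      using Suc.prems by simp
    from affine_fun_last[of k] show ?thesis
      by (rule affine_fun_cong) (metis \<open>i = k\<close> last_conv_nth diff_Suc_1 length_0_conv nat.distinct(1))
  qed
qed simp

lemma affine_fun_graph_subst:
  assumes "affine_fun (Suc k) f" "affine_fun k g"
  shows "affine_fun k (\<lambda>x. f (x @ [g x]))"
proof -
  obtain f0 a where f0: "affine_fun k f0" and f: "\<forall>x t. length x = k \<longrightarrow> f (x @ [t]) = f0 x + sm a t"
    using affine_fun_snoc_split[OF assms(1)] by blast
  have "affine_fun k (\<lambda>x. f0 x + sm a (g x))"
    by (intro affine_fun_add affine_fun_scale f0 assms(2))
  then show ?thesis
    by (rule affine_fun_cong) (simp add: f)
qed

lemma affine_fun_map2_add: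
  assumes "affine_fun k f" "length g = k" "length d = k"
  shows "f (map2 (+) g d) = (f g - f (replicate k 0)) + f d"
proof -
  obtain ls a where f: "length ls = k" "\<forall>x. length x = k \<longrightarrow> f x = lf sm ls a x"
    using assms(1) unfolding affine_fun_def by blast
  with assms show ?thesis
    using lf_replicate_zero[of ls a] by (simp add: lf_map2_add lf_const[of ls a g])
qed

definition affine_map :: "nat \<Rightarrow> ('m list \<Rightarrow> 'm list) \<Rightarrow> bool" where
  "affine_map k G \<longleftrightarrow> (\<forall>x. length x = k \<longrightarrow> length (G x) = k) \<and> (\<forall>i<k. affine_fun k (\<lambda>x. G x ! i))"

lemma affine_fun_comp:
  assumes "affine_fun k f" "affine_map k G"
  shows "affine_fun k (\<lambda>x. f (G x))"
proof -
  obtain ls a where f: "length ls = k" "\<forall>x. length x = k \<longrightarrow> f x = lf sm ls a x"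
    using assms(1) unfolding affine_fun_def by blast
  have "affine_fun k (\<lambda>x. \<Sum>i<k. sm (ls ! i) (G x ! i))"
    using assms(2) by (intro affine_fun_sum) (auto simp: affine_map_def intro: affine_fun_scale)
  then have "affine_fun k (\<lambda>x. (\<Sum>i<k. sm (ls ! i) (G x ! i)) + a)"
    by (rule affine_fun_add[OF _ affine_fun_const])
  then show ?thesis
    by (rule affine_fun_cong) (use f assms(2) in \<open>simp add: affine_map_def lf_as_sum\<close>)
qed

lemma affine_fun_shift:
  assumes "affine_map k G" "affine_fun k l" "affine_fun k c"
  shows "affine_fun k (\<lambda>x. l (G x) + c x)"
  using affine_fun_comp[OF assms(2,1)] assms(3) by (rule affine_fun_add)

lemma affine_map_diff_id:
  assumes "affine_map k G"
  shows "affine_map k (\<lambda>x. map2 (-) x (G x))"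
  unfolding affine_map_def
proof (intro conjI allI impI)
  fix i
  assume "i < k"
  with assms have "affine_fun k (\<lambda>x. G x ! i)"
    by (simp add: affine_map_def)
  then have "affine_fun k (\<lambda>x. x ! i - G x ! i)"
    by (rule affine_fun_diff[OF affine_fun_nth[OF \<open>i < k\<close>]])
  then show "affine_fun k (\<lambda>x. map2 (-) x (G x) ! i)"
    by (rule affine_fun_cong) (use assms \<open>i < k\<close> in \<open>simp add: affine_map_def\<close>)
qed (use assms in \<open>simp add: affine_map_def\<close>)

lemma affine_map_snoc:
  assumes "affine_map k G" "affine_fun (Suc k) S"
  shows "affine_map (Suc k) (\<lambda>y. G (butlast y) @ [S y])"
  unfolding affine_map_def
proof (intro conjI allI impI)
  fix i
  assume "i < Suc k"
  then consider "i < k" | "i = k"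
    by linarith
  then show "affine_fun (Suc k) (\<lambda>y. (G (butlast y) @ [S y]) ! i)"
  proof cases
    case 1
    with assms(1) have "affine_fun k (\<lambda>x. G x ! i)"
      by (simp add: affine_map_def)
    then have "affine_fun (Suc k) (\<lambda>y. G (butlast y) ! i)"
      by (rule affine_fun_butlast)
    then show ?thesis
      by (rule affine_fun_cong) (use 1 assms(1) in \<open>simp add: affine_map_def nth_append\<close>)
  next
    case 2
    from assms(2) show ?thesis
      by (rule affine_fun_cong) (use 2 assms(1) in \<open>simp add: affine_map_def nth_append\<close>)
  qed
qed (use assms(1) in \<open>simp add: affine_map_def\<close>)

definition linear_part :: "nat \<Rightarrow> ('m list \<Rightarrow> 'm) \<Rightarrow> 'm list \<Rightarrow> 'm" where
  "linear_part k f x = f x - f (replicate k 0)"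

lemma affine_fun_linear_part: "affine_fun k f \<Longrightarrow> affine_fun k (linear_part k f)"
  unfolding linear_part_def by (rule affine_fun_diff[OF _ affine_fun_const])

lemma sm_abs_bound: "- N \<le> y \<Longrightarrow> y \<le> N \<Longrightarrow> - sm (abs l) N \<le> sm l y \<and> sm l y \<le> sm (abs l) N"
proof (cases "0 \<le> l")
  case True
  moreover assume "- N \<le> y" "y \<le> N"
  ultimately show ?thesis
    using sm_mono[of l "- N" y] sm_mono[of l y N] by (simp add: sm_minus_right)
next
  case False
  moreover assume "- N \<le> y" "y \<le> N"
  ultimately show ?thesis
    using sm_mono[of "- l" "- N" y] sm_mono[of "- l" y N] by (auto simp: sm_minus_right sm_minus_left le_minus_iff)
qed

lemma lf_bounded:
  "\<exists>B. \<forall>x. length x = length ls \<longrightarrow> (\<forall>t\<in>set x. - N \<le> t \<and> t \<le> N) \<longrightarrow>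
    - B \<le> lf sm ls a x \<and> lf sm ls a x \<le> B"
proof (induction ls)
  case Nil
  show ?case
    by (intro exI[of _ "max a (- a)"]) (auto simp: max_def)
next
  case (Cons l ls)
  then obtain B where B: "\<forall>x. length x = length ls \<longrightarrow> (\<forall>t\<in>set x. - N \<le> t \<and> t \<le> N) \<longrightarrow>
      - B \<le> lf sm ls a x \<and> lf sm ls a x \<le> B"
    by blast
  show ?case
  proof (intro exI[of _ "sm (abs l) N + B"] allI impI)
    fix x :: "'m list"
    assume "length x = length (l # ls)" and x: "\<forall>t\<in>set x. - N \<le> t \<and> t \<le> N"
    then obtain y ys where "x = y # ys" "length ys = length ls"
      by (cases x) auto
    moreover from this x have "- sm (abs l) N \<le> sm l y \<and> sm l y \<le> sm (abs l) N"
      using sm_abs_bound by simp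
    moreover have "- B \<le> lf sm ls a ys \<and> lf sm ls a ys \<le> B"
      using B x \<open>x = y # ys\<close> \<open>length ys = length ls\<close> by simp
    ultimately show "- (sm (abs l) N + B) \<le> lf sm (l # ls) a x \<and> lf sm (l # ls) a x \<le> sm (abs l) N + B"
      using add_mono[of "- sm (abs l) N" "sm l y" "- B" "lf sm ls a ys"]
        add_mono[of "sm l y" "sm (abs l) N" "lf sm ls a ys" B]
      by (simp add: lf_Cons)
  qed
qed

lemma affine_fun_bounded:
  assumes "bounded_set k D" "affine_fun k f"
  obtains B where "\<forall>d\<in>D. - B \<le> f d \<and> f d \<le> B"
proof -
  obtain N where N: "\<forall>d\<in>D. \<forall>t\<in>set d. - N \<le> t \<and> t \<le> N" and len: "\<forall>d\<in>D. length d = k"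
    using assms(1) unfolding bounded_set_def by blast
  obtain ls a where f: "length ls = k" "\<forall>x. length x = k \<longrightarrow> f x = lf sm ls a x"
    using assms(2) unfolding affine_fun_def by blast
  obtain B where "\<forall>x. length x = k \<longrightarrow> (\<forall>t\<in>set x. - N \<le> t \<and> t \<le> N) \<longrightarrow>
      - B \<le> lf sm ls a x \<and> lf sm ls a x \<le> B"
    using lf_bounded[of ls N a] f(1) by blast
  with N len f have "\<forall>d\<in>D. - B \<le> f d \<and> f d \<le> B"
    by auto
  then show ?thesis
    by (rule that)
qed

lemma bounded_set_Sigma_graph:
  assumes "bounded_set k D" "affine_fun k \<delta>"
  shows "bounded_set (Suc k) (Sigma_snoc D (\<lambda>d s. s = \<delta> d))"
proof -
  obtain B where "\<forall>d\<in>D. - B \<le> \<delta> d \<and> \<delta> d \<le> B"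
    using assms by (rule affine_fun_bounded)
  with assms(1) show ?thesis
    by (intro bounded_set_Sigma_snoc) auto
qed

lemma bounded_set_Sigma_between:
  assumes D: "bounded_set k D" and \<alpha>: "affine_fun k \<alpha>" and \<beta>: "affine_fun k \<beta>"
  shows "bounded_set (Suc k) (Sigma_snoc D (between (Some \<alpha>) (Some \<beta>)))"
proof -
  obtain B1 B2 where B: "\<forall>d\<in>D. - B1 \<le> \<alpha> d \<and> \<alpha> d \<le> B1" "\<forall>d\<in>D. - B2 \<le> \<beta> d \<and> \<beta> d \<le> B2"
    using affine_fun_bounded[OF D \<alpha>] affine_fun_bounded[OF D \<beta>] by metis
  have "- max B1 B2 \<le> s \<and> s \<le> max B1 B2" if "d \<in> D" "between (Some \<alpha>) (Some \<beta>) d s" for d s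
  proof -
    from that have "\<alpha> d < s" "s < \<beta> d"
      by (simp_all add: between_def)
    moreover have "- B1 \<le> \<alpha> d" "\<beta> d \<le> B2"
      using B that(1) by blast+
    moreover have "- max B1 B2 \<le> - B1" "B2 \<le> max B1 B2"
      by simp_all
    ultimately show ?thesis
      by (meson order.trans less_imp_le)
  qed
  with D show ?thesis
    by (intro bounded_set_Sigma_snoc) blast
qed

section \<open>Linear cells\<close>

lemma bounds_lt_iff_bounds_ordered:
  "bounds_lt sm lo hi x \<longleftrightarrow> bounds_ordered (map_option (\<lambda>(ls, a). lf sm ls a) lo) (map_option (\<lambda>(ls, a). lf sm ls a) hi) x"
  by (auto simp: bounds_lt_def bounds_ordered_def split: option.splits)

lemma cyl_eq_Sigma_snoc_between:
  "{x @ [t] | x t. x \<in> X \<and> lower_ok sm lo x t \<and> upper_ok sm hi x t} =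
    Sigma_snoc X (between (map_option (\<lambda>(ls, a). lf sm ls a) lo) (map_option (\<lambda>(ls, a). lf sm ls a) hi))"
proof -
  have "lower_ok sm lo x t \<and> upper_ok sm hi x t \<longleftrightarrow>
      between (map_option (\<lambda>(ls, a). lf sm ls a) lo) (map_option (\<lambda>(ls, a). lf sm ls a) hi) x t" for x t
    by (auto simp: between_def lower_ok_def upper_ok_def split: option.split)
  then show ?thesis
    unfolding Sigma_snoc_def by simp
qed

lemma affine_fun_on_Sigma_snoc:
  assumes "linear_cell sm k X" "affine_fun (Suc k) f"
  obtains f0 a where "affine_fun k f0" "\<And>x t. x \<in> X \<Longrightarrow> f (x @ [t]) = f0 x + sm a t"
proof -
  obtain f0 a where "affine_fun k f0" "\<forall>x t. length x = k \<longrightarrow> f (x @ [t]) = f0 x + sm a t"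
    using affine_fun_snoc_split[OF assms(2)] by blast
  with linear_cell_length[OF assms(1)] that show ?thesis
    by simp
qed

lemma linear_cell_affine_induct [consumes 1, case_names Nil graph between]:
  assumes "linear_cell sm n C"
    and "P 0 {[]}"
    and "\<And>k X f. linear_cell sm k X \<Longrightarrow> P k X \<Longrightarrow> affine_fun k f \<Longrightarrow>
      P (Suc k) (Sigma_snoc X (\<lambda>x t. t = f x))"
    and "\<And>k X Lo Hi. linear_cell sm k X \<Longrightarrow> P k X \<Longrightarrow>
      pred_option (affine_fun k) Lo \<Longrightarrow> pred_option (affine_fun k) Hi \<Longrightarrow> (\<forall>x\<in>X. bounds_ordered Lo Hi x) \<Longrightarrow>
      P (Suc k) (Sigma_snoc X (between Lo Hi))"
  shows "P n C"
  using assms(1)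
proof (induction rule: linear_cell.induct)
  case zero
  show ?case by (rule assms(2))
next
  case (graph k X ls a)
  from assms(3)[OF graph.hyps(1) graph.IH affine_fun_lf[OF graph.hyps(2)]] show ?case
    by (simp add: Sigma_snoc_graph)
next
  case (cyl k X lo hi)
  let ?lf = "\<lambda>(ls, a). lf sm ls a"
  have "pred_option (affine_fun k) (map_option ?lf lo)" "pred_option (affine_fun k) (map_option ?lf hi)"
    using cyl.hyps(2,3) by (auto simp: option.pred_set intro: affine_fun_lf)
  moreover have "\<forall>x\<in>X. bounds_ordered (map_option ?lf lo) (map_option ?lf hi) x"
    using cyl.hyps(4) by (simp add: bounds_lt_iff_bounds_ordered)
  ultimately show ?case
    unfolding cyl_eq_Sigma_snoc_between using assms(4) cyl.hyps(1) cyl.IH by blast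
qed

lemma linear_cell_Sigma_graph:
  assumes "linear_cell sm k X" "affine_fun k f"
  shows "linear_cell sm (Suc k) (Sigma_snoc X (\<lambda>x t. t = f x))"
proof -
  obtain ls a where f: "length ls = k" "\<forall>x. length x = k \<longrightarrow> f x = lf sm ls a x"
    using assms(2) unfolding affine_fun_def by blast
  with linear_cell_length[OF assms(1)] have "Sigma_snoc X (\<lambda>x t. t = f x) = (\<lambda>x. x @ [lf sm ls a x]) ` X"
    unfolding Sigma_snoc_graph by (auto simp: image_iff)
  then show ?thesis
    using linear_cell.graph[OF assms(1) f(1)] by simp
qed

definition affine_coeffs :: "nat \<Rightarrow> ('m list \<Rightarrow> 'm) \<Rightarrow> 'k list \<times> 'm" where
  "affine_coeffs k f = (SOME c. length (fst c) = k \<and> (\<forall>x. length x = k \<longrightarrow> f x = lf sm (fst c) (snd c) x))"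

lemma affine_coeffs:
  assumes "affine_fun k f"
  shows "length (fst (affine_coeffs k f)) = k"
    and "\<And>x. length x = k \<Longrightarrow> lf sm (fst (affine_coeffs k f)) (snd (affine_coeffs k f)) x = f x"
proof -
  from assms have "\<exists>c. length (fst c) = k \<and> (\<forall>x. length x = k \<longrightarrow> f x = lf sm (fst c) (snd c) x)"
    unfolding affine_fun_def by auto
  then have "length (fst (affine_coeffs k f)) = k \<and>
      (\<forall>x. length x = k \<longrightarrow> f x = lf sm (fst (affine_coeffs k f)) (snd (affine_coeffs k f)) x)"
    unfolding affine_coeffs_def by (rule someI_ex)
  then show "length (fst (affine_coeffs k f)) = k"
    and "\<And>x. length x = k \<Longrightarrow> lf sm (fst (affine_coeffs k f)) (snd (affine_coeffs k f)) x = f x"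
    by simp_all
qed

lemma linear_cell_Sigma_between:
  assumes X: "linear_cell sm k X"
    and Lo: "pred_option (affine_fun k) Lo" and Hi: "pred_option (affine_fun k) Hi"
    and ord: "\<forall>x\<in>X. bounds_ordered Lo Hi x"
  shows "linear_cell sm (Suc k) (Sigma_snoc X (between Lo Hi))"
proof -
  let ?lf = "\<lambda>(ls, a). lf sm ls a"
  let ?lo = "map_option (affine_coeffs k) Lo" and ?hi = "map_option (affine_coeffs k) Hi"
  have eval: "(?lf \<circ> affine_coeffs k) f x = f x" if "f \<in> set_option Lo \<union> set_option Hi" "x \<in> X" for f x
    using that Lo Hi affine_coeffs(2) linear_cell_length[OF X] by (auto simp: option.pred_set case_prod_beta)
  have "linear_cell sm (Suc k) {x @ [t] | x t. x \<in> X \<and> lower_ok sm ?lo x t \<and> upper_ok sm ?hi x t}"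
  proof (rule linear_cell.cyl[OF X])
    show "\<forall>(ls, a)\<in>set_option ?lo. length ls = k" "\<forall>(ls, a)\<in>set_option ?hi. length ls = k"
      using Lo Hi affine_coeffs(1) by (auto simp: option.pred_set) (metis fst_conv)+
    show "\<forall>x\<in>X. bounds_lt sm ?lo ?hi x"
    proof
      fix x
      assume "x \<in> X"
      have "bounds_ordered (map_option (?lf \<circ> affine_coeffs k) Lo) (map_option (?lf \<circ> affine_coeffs k) Hi) x \<longleftrightarrow>
          bounds_ordered Lo Hi x"
        by (rule bounds_ordered_map_option_cong) (use eval \<open>x \<in> X\<close> in blast)
      with ord \<open>x \<in> X\<close> show "bounds_lt sm ?lo ?hi x"
        by (simp add: bounds_lt_iff_bounds_ordered option.map_comp)
    qed
  qed
  also have "\<dots> = Sigma_snoc X (between Lo Hi)"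
    unfolding cyl_eq_Sigma_snoc_between option.map_comp
    using eval by (intro Sigma_snoc_cong between_map_option_cong) auto
  finally show ?thesis .
qed

lemma linear_cell_Sigma_between_shift:
  assumes X: "linear_cell sm k X" and F: "affine_map k F" and c: "affine_fun k c"
    and Lo: "pred_option (affine_fun k) Lo" and Hi: "pred_option (affine_fun k) Hi"
    and ord: "\<forall>x\<in>X. bounds_ordered Lo Hi (F x)"
  shows "linear_cell sm (Suc k) (Sigma_snoc X (\<lambda>x t. between Lo Hi (F x) (t - c x)))"
proof -
  let ?shift = "\<lambda>l y. l (F y) + c y"
  have "linear_cell sm (Suc k) (Sigma_snoc X (between (map_option ?shift Lo) (map_option ?shift Hi)))"
  proof (rule linear_cell_Sigma_between[OF X])
    have "affine_fun k (?shift l)" if "affine_fun k l" for l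
      using F that c by (rule affine_fun_shift)
    with Lo Hi show "pred_option (affine_fun k) (map_option ?shift Lo)" "pred_option (affine_fun k) (map_option ?shift Hi)"
      by (cases Lo; cases Hi; simp)+
    show "\<forall>x\<in>X. bounds_ordered (map_option ?shift Lo) (map_option ?shift Hi) x"
      using ord by (auto simp: bounds_ordered_def)
  qed
  also have "Sigma_snoc X (between (map_option ?shift Lo) (map_option ?shift Hi)) =
      Sigma_snoc X (\<lambda>x t. between Lo Hi (F x) (t - c x))"
    by (rule Sigma_snoc_cong) (rule between_diff_iff[symmetric])
  finally show ?thesis .
qed

lemma wide_fibres_Sigma_between:
  assumes "\<And>N. \<exists>x\<in>X. N < u x - (l x :: 'm)"
  shows "wide_fibres (Sigma_snoc X (between (Some l) (Some u)))"
  unfolding wide_fibres_def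
proof (intro allI impI)
  fix N :: 'm
  obtain x where "x \<in> X" "N < u x - l x"
    using assms by blast
  then have "l x < u x - N"
    by (simp add: less_diff_eq add.commute)
  then obtain s1 where s1: "l x < s1" "s1 < u x - N"
    using exists_between by blast
  then have "s1 + N < u x"
    by (simp add: less_diff_eq)
  then obtain s2 where s2: "s1 + N < s2" "s2 < u x"
    using exists_between by blast
  assume "0 \<le> N"
  then have "s1 < s2"
    using s2(1) by (simp add: le_less_trans[of s1 "s1 + N"])
  with s1 s2 have "x @ [s1] \<in> Sigma_snoc X (between (Some l) (Some u))" "x @ [s2] \<in> Sigma_snoc X (between (Some l) (Some u))"
    using \<open>x \<in> X\<close> \<open>s1 + N < u x\<close> \<open>0 \<le> N\<close> by (auto simp: between_def)
  with s2(1) show "\<exists>y s1 s2. y @ [s1] \<in> Sigma_snoc X (between (Some l) (Some u)) \<and>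
      y @ [s2] \<in> Sigma_snoc X (between (Some l) (Some u)) \<and> s1 + N < s2"
    by blast
qed

section \<open>Product cells with an affine projection\<close>

definition affine_projection :: "nat \<Rightarrow> 'm list set \<Rightarrow> 'm list set \<Rightarrow> ('m list \<Rightarrow> 'm list) \<Rightarrow> bool" where
  "affine_projection k J D G \<longleftrightarrow> (\<forall>g\<in>J. length g = k) \<and> (\<forall>d\<in>D. length d = k) \<and> affine_map k G \<and>
     (\<forall>g\<in>J. \<forall>d\<in>D. G (map2 (+) g d) = g)"

lemma affine_projection_msum:
  assumes "affine_projection k J D G" "x \<in> msum J D"
  shows "G x \<in> J" "map2 (-) x (G x) \<in> D" "map2 (+) (G x) (map2 (-) x (G x)) = x"
proof -
  from assms(2) obtain g d where x: "x = map2 (+) g d" "g \<in> J" "d \<in> D"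
    unfolding msum_def by blast
  with assms(1) have "G x = g" "length g = length d"
    unfolding affine_projection_def by simp_all
  with x show "G x \<in> J" "map2 (-) x (G x) \<in> D" "map2 (+) (G x) (map2 (-) x (G x)) = x"
    by (simp_all add: map2_add_diff_cancel)
qed

lemma affine_projection_unique:
  assumes "affine_projection k J D G" "x \<in> msum J D"
  shows "\<exists>!p. fst p \<in> J \<and> snd p \<in> D \<and> x = map2 (+) (fst p) (snd p)"
proof (rule ex1I[of _ "(G x, map2 (-) x (G x))"])
  fix p
  assume p: "fst p \<in> J \<and> snd p \<in> D \<and> x = map2 (+) (fst p) (snd p)"
  with assms(1) have "G x = fst p" "length (fst p) = length (snd p)"
    unfolding affine_projection_def by simp_all
  with p show "p = (G x, map2 (-) x (G x))"
    by (simp add: map2_add_diff_cancel prod_eq_iff)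
qed (use affine_projection_msum[OF assms] in simp)

lemma affine_projection_split:
  assumes "affine_projection k J D G" "x \<in> msum J D" "affine_fun k f"
  shows "f x = linear_part k f (G x) + f (map2 (-) x (G x))"
proof -
  have "length (G x) = k" "length (map2 (-) x (G x)) = k"
    using assms(1) affine_projection_msum(1,2)[OF assms(1,2)] unfolding affine_projection_def by blast+
  with assms(3) have "f (map2 (+) (G x) (map2 (-) x (G x))) = linear_part k f (G x) + f (map2 (-) x (G x))"
    unfolding linear_part_def by (rule affine_fun_map2_add)
  with affine_projection_msum(3)[OF assms(1,2)] show ?thesis
    by simp
qed

lemma msum_Sigma_snoc:
  assumes "affine_projection k J D G"
  shows "msum (Sigma_snoc J PJ) (Sigma_snoc D PD) =
    Sigma_snoc (msum J D) (\<lambda>x t. \<exists>s s'. PJ (G x) s \<and> PD (map2 (-) x (G x)) s' \<and> t = s + s')"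
  (is "?L = ?R")
proof
  show "?L \<subseteq> ?R"
  proof
    fix c
    assume "c \<in> ?L"
    then obtain g s d s' where c: "c = map2 (+) (g @ [s]) (d @ [s'])" "g \<in> J" "PJ g s" "d \<in> D" "PD d s'"
      unfolding msum_def by (auto elim!: Sigma_snocE)
    with assms have "length g = length d" "G (map2 (+) g d) = g"
      unfolding affine_projection_def by simp_all
    with c show "c \<in> ?R"
      by (auto simp: msum_def map2_add_diff_cancel)
  qed
next
  show "?R \<subseteq> ?L"
  proof
    fix c
    assume "c \<in> ?R"
    then obtain x s s' where c: "c = x @ [s + s']" "x \<in> msum J D" "PJ (G x) s" "PD (map2 (-) x (G x)) s'"
      by (auto elim!: Sigma_snocE)
    note x = affine_projection_msum[OF assms c(2)]
    with assms have "length (G x) = k" "length (map2 (-) x (G x)) = k"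
      unfolding affine_projection_def by blast+
    with c x(3) have "c = map2 (+) (G x @ [s]) (map2 (-) x (G x) @ [s'])"
      by simp
    with c x(1,2) show "c \<in> ?L"
      unfolding msum_def by fastforce
  qed
qed

lemma affine_projection_Sigma_snoc:
  assumes "affine_projection k J D G" "affine_fun (Suc k) S"
    and "\<And>g d s s'. g \<in> J \<Longrightarrow> d \<in> D \<Longrightarrow> PJ g s \<Longrightarrow> PD d s' \<Longrightarrow> S (map2 (+) g d @ [s + s']) = s"
  shows "affine_projection (Suc k) (Sigma_snoc J PJ) (Sigma_snoc D PD) (\<lambda>y. G (butlast y) @ [S y])"
  using assms unfolding affine_projection_def
  by (auto simp: affine_map_snoc ball_Sigma_snoc)

definition product_decomposition ::
  "nat \<Rightarrow> 'm list set \<Rightarrow> 'm list set \<Rightarrow> 'm list set \<Rightarrow> ('m list \<Rightarrow> 'm list) \<Rightarrow> bool" where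
  "product_decomposition k A J D G \<longleftrightarrow> linear_cell sm k J \<and> purely_unbounded k J \<and>
     linear_cell sm k D \<and> bounded_set k D \<and> A = msum J D \<and> affine_projection k J D G"

(* The J-component of a point of A depends affinely on the point.  This strengthening of
   product_cell is what allows the decomposition to be extended one coordinate at a time. *)
definition affine_product_cell :: "nat \<Rightarrow> 'm list set \<Rightarrow> bool" where
  "affine_product_cell k A \<longleftrightarrow> linear_cell sm k A \<and> (\<exists>J D G. product_decomposition k A J D G)"

lemma affine_product_cell_imp_product_cell: "affine_product_cell k A \<Longrightarrow> product_cell sm k A"
  unfolding affine_product_cell_def product_decomposition_def product_cell_def
  by (metis affine_projection_unique)

lemma affine_product_cell_Nil: "affine_product_cell 0 {[]}"
proof -
  have "msum {[]} {[]} = {[]::'m list}"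
    unfolding msum_def by auto
  moreover have "affine_projection 0 {[]} {[]} (\<lambda>x. [])"
    unfolding affine_projection_def affine_map_def by simp
  ultimately show ?thesis
    unfolding affine_product_cell_def product_decomposition_def bounded_set_def
    by (auto intro: linear_cell.zero)
qed

end

section \<open>Affine functions on linear cells\<close>

locale nontrivial_ordered_vspace = ordered_vspace sm
  for sm :: "'k::{division_ring,linordered_ring_strict} \<Rightarrow> 'm::linordered_ab_group_add \<Rightarrow> 'm" +
  assumes exists_pos: "\<exists>e::'m. 0 < e"
begin

lemma exists_greater: "\<exists>t. (x::'m) < t"
  using exists_pos by (metis less_add_same_cancel1)

lemma exists_less: "\<exists>t. t < (x::'m)"
  using exists_pos by (metis diff_less_eq less_add_same_cancel1)

lemma between_exists_below:
  assumes "bounds_ordered Lo Hi x" "\<forall>l\<in>set_option Lo. l x < v"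
  shows "\<exists>t. between Lo Hi x t \<and> t < (v::'m)"
proof -
  obtain w where w: "w \<le> v" "\<forall>u\<in>set_option Hi. w \<le> u x" "\<forall>l\<in>set_option Lo. l x < w"
  proof (cases Hi)
    case None
    with assms(2) that[of v] show ?thesis by simp
  next
    case (Some u)
    with assms that[of "min v (u x)"] show ?thesis by (simp add: bounds_ordered_def)
  qed
  obtain t where "t < w" "\<forall>l\<in>set_option Lo. l x < t"
  proof (cases Lo)
    case None
    with exists_less that show ?thesis by auto
  next
    case (Some l)
    with w(3) exists_between[of "l x" w] that show ?thesis by auto
  qed
  with w show ?thesis
    unfolding between_def by (meson order.strict_trans2)
qed

lemma between_exists_above:
  assumes "bounds_ordered Lo Hi x" "\<forall>u\<in>set_option Hi. v < u x"
  shows "\<exists>t. between Lo Hi x t \<and> (v::'m) < t"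
proof -
  obtain w where w: "v \<le> w" "\<forall>l\<in>set_option Lo. l x \<le> w" "\<forall>u\<in>set_option Hi. w < u x"
  proof (cases Lo)
    case None
    with assms(2) that[of v] show ?thesis by simp
  next
    case (Some l)
    with assms that[of "max v (l x)"] show ?thesis by (simp add: bounds_ordered_def)
  qed
  obtain t where "w < t" "\<forall>u\<in>set_option Hi. t < u x"
  proof (cases Hi)
    case None
    with exists_greater that show ?thesis by auto
  next
    case (Some u)
    with w(3) exists_between[of w "u x"] that show ?thesis by auto
  qed
  with w show ?thesis
    unfolding between_def by (meson order.strict_trans1)
qed

lemma between_exists:
  assumes "bounds_ordered Lo Hi x"
  shows "\<exists>t. between Lo Hi x (t::'m)"
proof -
  obtain v :: 'm where "\<forall>l\<in>set_option Lo. l x < v"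
    using exists_greater by (cases Lo) auto
  then show ?thesis
    using between_exists_below[OF assms] by blast
qed

lemma linear_cell_nonempty: "linear_cell sm k X \<Longrightarrow> X \<noteq> {}"
proof (induction rule: linear_cell_affine_induct)
  case (graph k X f)
  from \<open>X \<noteq> {}\<close> obtain x where "x \<in> X"
    by auto
  then have "x @ [f x] \<in> Sigma_snoc X (\<lambda>x t. t = f x)"
    by simp
  then show ?case
    by (metis empty_iff)
next
  case (between k X Lo Hi)
  from \<open>X \<noteq> {}\<close> obtain x where "x \<in> X"
    by auto
  with between.hyps(4) have "bounds_ordered Lo Hi x"
    by blast
  then obtain t where "between Lo Hi x t"
    using between_exists[of Lo Hi x] by blast
  with \<open>x \<in> X\<close> have "x @ [t] \<in> Sigma_snoc X (between Lo Hi)"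
    by simp
  then show ?case
    by (metis empty_iff)
qed simp

lemma between_sm_local_min:
  assumes "between Lo Hi x t0" "\<And>t. between Lo Hi x t \<Longrightarrow> sm a t0 \<le> sm a t"
  shows "a = 0"
proof -
  have ord: "bounds_ordered Lo Hi x"
    using assms(1) by (rule between_imp_bounds_ordered)
  have "\<forall>l\<in>set_option Lo. l x < t0" "\<forall>u\<in>set_option Hi. t0 < u x"
    using assms(1) unfolding between_def by blast+
  then obtain t1 t2 where "between Lo Hi x t1" "t1 < t0" "between Lo Hi x t2" "t0 < t2"
    using between_exists_below[OF ord, of t0] between_exists_above[OF ord, of t0] by blast
  show ?thesis
  proof (rule ccontr)
    assume "a \<noteq> 0"
    then consider "a < 0" | "0 < a"
      by (rule linorder_neqE)
    then show False
    proof cases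
      case 2
      from 2 \<open>t1 < t0\<close> have "sm a t1 < sm a t0" by (rule sm_strict_mono)
      with assms(2)[OF \<open>between Lo Hi x t1\<close>] show False by simp
    next
      case 1
      from 1 \<open>t0 < t2\<close> have "sm a t2 < sm a t0" by (rule sm_strict_antimono)
      with assms(2)[OF \<open>between Lo Hi x t2\<close>] show False by simp
    qed
  qed
qed

lemma not_is_graph_Sigma_between:
  fixes X :: "'m list set"
  assumes "x \<in> X" "between Lo Hi x t"
  shows "\<not> is_graph (Sigma_snoc X (between Lo Hi))"
proof
  assume graph: "is_graph (Sigma_snoc X (between Lo Hi))"
  have "bounds_ordered Lo Hi x" "\<forall>l\<in>set_option Lo. l x < t"
    using assms(2) by (auto simp: between_def intro: between_imp_bounds_ordered)
  then obtain t1 where "between Lo Hi x t1" "t1 < t"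
    using between_exists_below[of Lo Hi x t] by blast
  with assms have "x @ [t1] \<in> Sigma_snoc X (between Lo Hi)" "x @ [t] \<in> Sigma_snoc X (between Lo Hi)"
    by simp_all
  with graph have "butlast (x @ [t1]) = butlast (x @ [t]) \<longrightarrow> x @ [t1] = x @ [t]"
    unfolding is_graph_def by blast
  with \<open>t1 < t\<close> show False
    by simp
qed

lemma is_inf_sm_between_lower:
  assumes "0 < a" "bounds_ordered (Some e) Hi x"
  shows "is_inf {b + sm a t | t. between (Some e) Hi x t} (b + sm a (e x))"
  unfolding is_inf_def
proof (intro conjI allI impI ballI)
  fix s
  assume "s \<in> {b + sm a t | t. between (Some e) Hi x t}"
  then obtain t where "s = b + sm a t" "e x < t"
    by (auto simp: between_def)
  with sm_strict_mono[OF assms(1) \<open>e x < t\<close>] show "b + sm a (e x) \<le> s"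
    by simp
next
  fix v
  assume v: "b + sm a (e x) < v"
  define w where "w = e x + sm (inverse a) (v - b - sm a (e x))"
  have "e x < w"
    using assms(1) v unfolding w_def
    by (intro less_add_same_cancel1[THEN iffD2] sm_pos ordered_division_ring_inverse_pos)
      (simp_all add: less_diff_eq add.commute)
  then obtain t where "between (Some e) Hi x t" "t < w"
    using between_exists_below[OF assms(2), of w] by auto
  moreover have "sm a w = v - b"
    using assms(1) by (simp add: w_def sm_add_right)
  with sm_strict_mono[OF assms(1) \<open>t < w\<close>] have "b + sm a t < v"
    by (simp add: less_diff_eq add.commute)
  ultimately show "\<exists>s\<in>{b + sm a t | t. between (Some e) Hi x t}. s < v"
    by blast
qed

lemma is_inf_sm_between_upper:
  assumes "a < 0" "bounds_ordered Lo (Some e) x"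
  shows "is_inf {b + sm a t | t. between Lo (Some e) x t} (b + sm a (e x))"
  unfolding is_inf_def
proof (intro conjI allI impI ballI)
  fix s
  assume "s \<in> {b + sm a t | t. between Lo (Some e) x t}"
  then obtain t where "s = b + sm a t" "t < e x"
    by (auto simp: between_def)
  with sm_strict_antimono[OF assms(1) \<open>t < e x\<close>] show "b + sm a (e x) \<le> s"
    by simp
next
  fix v
  assume v: "b + sm a (e x) < v"
  define w where "w = e x + sm (inverse a) (v - b - sm a (e x))"
  have "w < e x"
    using assms(1) v unfolding w_def
    by (intro add_less_same_cancel1[THEN iffD2] sm_neg ordered_division_ring_inverse_neg)
      (simp_all add: less_diff_eq add.commute)
  then obtain t where "between Lo (Some e) x t" "w < t"
    using between_exists_above[OF assms(2), of w] by auto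
  moreover have "sm a w = v - b"
    using assms(1) by (simp add: w_def sm_add_right)
  with sm_strict_antimono[OF assms(1) \<open>w < t\<close>] have "b + sm a t < v"
    by (simp add: less_diff_eq add.commute)
  ultimately show "\<exists>s\<in>{b + sm a t | t. between Lo (Some e) x t}. s < v"
    by blast
qed

lemma is_inf_sm_between:
  assumes "a \<noteq> 0" "bounds_ordered Lo Hi x" "e \<in> set_option (if 0 < a then Lo else Hi)"
  shows "is_inf {b + sm a t | t. between Lo Hi x t} (b + sm a (e x))"
proof (cases "0 < a")
  case True
  with assms(3) have "Lo = Some e"
    by simp
  with True assms(2) show ?thesis
    using is_inf_sm_between_lower[of a e Hi x b] by simp
next
  case False
  with assms(1) have "a < 0"
    by simp
  from False assms(3) have "Hi = Some e"
    by simp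
  with \<open>a < 0\<close> assms(2) show ?thesis
    using is_inf_sm_between_upper[of a Lo e x b] by simp
qed

lemma between_sm_unbounded_below:
  assumes "a \<noteq> 0" "bounds_ordered Lo Hi x" "(if 0 < a then Lo else Hi) = None"
  shows "\<exists>t. between Lo Hi x t \<and> b + sm a t < v"
proof -
  define w where "w = sm (inverse a) (v - b)"
  have "sm a w = v - b"
    using assms(1) by (simp add: w_def)
  show ?thesis
  proof (cases "0 < a")
    case True
    with assms(3) have "Lo = None" by simp
    then obtain t where "between Lo Hi x t" "t < w"
      using between_exists_below[OF assms(2), of w] by auto
    moreover have "b + sm a t < v"
      using sm_strict_mono[OF True \<open>t < w\<close>] \<open>sm a w = v - b\<close> by (simp add: less_diff_eq add.commute)
    ultimately show ?thesis
      by blast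
  next
    case False
    with assms(1) have "a < 0" by simp
    from False assms(3) have "Hi = None" by simp
    then obtain t where "between Lo Hi x t" "w < t"
      using between_exists_above[OF assms(2), of w] by auto
    moreover have "b + sm a t < v"
      using sm_strict_antimono[OF \<open>a < 0\<close> \<open>w < t\<close>] \<open>sm a w = v - b\<close> by (simp add: less_diff_eq add.commute)
    ultimately show ?thesis
      by blast
  qed
qed

lemma affine_min_on_cell_const:
  assumes "linear_cell sm k K" "affine_fun k f" "x0 \<in> K" "\<forall>x\<in>K. f x0 \<le> f x"
  shows "\<forall>x\<in>K. f x = f x0"
  using assms
proof (induction arbitrary: f x0 rule: linear_cell_affine_induct)
  case (graph k X g)
  then obtain y0 where y0: "y0 \<in> X" "x0 = y0 @ [g y0]"
    by (auto simp: Sigma_snoc_graph)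
  with graph.prems(3) have "\<forall>x\<in>X. f (y0 @ [g y0]) \<le> f (x @ [g x])"
    by (simp add: Sigma_snoc_graph)
  with graph.IH[OF affine_fun_graph_subst[OF graph.prems(1) graph.hyps(2)] y0(1)] y0(2) show ?case
    by (simp add: Sigma_snoc_graph)
next
  case (between k X Lo Hi)
  obtain f0 a where f0: "affine_fun k f0" and fX: "\<And>x t. x \<in> X \<Longrightarrow> f (x @ [t]) = f0 x + sm a t"
    by (rule affine_fun_on_Sigma_snoc[OF between.hyps(1) between.prems(1)]) (rule that)
  obtain y0 t0 where y0: "x0 = y0 @ [t0]" "y0 \<in> X" "between Lo Hi y0 t0"
    using between.prems(2) by (rule Sigma_snocE)
  have min: "f0 y0 + sm a t0 \<le> f0 x + sm a t" if "x \<in> X" "between Lo Hi x t" for x t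
    using between.prems(3) that fX fX[OF y0(2)] y0(1) unfolding ball_Sigma_snoc by auto
  have "a = 0"
    using y0(3) by (rule between_sm_local_min) (use min[OF y0(2)] in simp)
  have "f0 y0 \<le> f0 x" if "x \<in> X" for x
    using min[OF that] between_exists[of Lo Hi x] between.hyps(4) that \<open>a = 0\<close> by fastforce
  with between.IH[OF f0 y0(2)] have const: "\<forall>x\<in>X. f0 x = f0 y0"
    by blast
  show ?case
    unfolding ball_Sigma_snoc
  proof (intro ballI allI impI)
    fix x t
    assume "x \<in> X"
    with fX[OF this] fX[OF y0(2)] y0(1) \<open>a = 0\<close> const show "f (x @ [t]) = f x0"
      by simp
  qed
qed simp

lemma affine_bounded_on_pu_cell_const:
  assumes "linear_cell sm k K" "purely_unbounded k K" "affine_fun k f"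
    and "\<forall>x\<in>K. B1 \<le> f x \<and> f x \<le> B2" "x0 \<in> K"
  shows "\<forall>x\<in>K. f x = f x0"
  using assms
proof (induction arbitrary: f x0 rule: linear_cell_affine_induct)
  case (graph k X g)
  then obtain y0 where y0: "y0 \<in> X" "x0 = y0 @ [g y0]"
    by (auto simp: Sigma_snoc_graph)
  have "purely_unbounded k X"
    using graph.prems(1) by (rule purely_unbounded_Sigma_snoc_base) simp
  moreover from graph.prems(3) have "\<forall>x\<in>X. B1 \<le> f (x @ [g x]) \<and> f (x @ [g x]) \<le> B2"
    by (simp add: Sigma_snoc_graph)
  ultimately show ?case
    using graph.IH[OF _ affine_fun_graph_subst[OF graph.prems(2) graph.hyps(2)] _ y0(1)] y0(2)
    by (simp add: Sigma_snoc_graph)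
next
  case (between k X Lo Hi)
  let ?K = "Sigma_snoc X (between Lo Hi)"
  obtain f0 a where f0: "affine_fun k f0" and fX: "\<And>x t. x \<in> X \<Longrightarrow> f (x @ [t]) = f0 x + sm a t"
    by (rule affine_fun_on_Sigma_snoc[OF between.hyps(1) between.prems(2)]) (rule that)
  have bounded: "B1 \<le> f0 x + sm a t \<and> f0 x + sm a t \<le> B2" if "x \<in> X" "between Lo Hi x t" for x t
    using between.prems(3) that fX unfolding ball_Sigma_snoc by auto
  have fibre: "\<exists>t. between Lo Hi x t" if "x \<in> X" for x
    using between_exists[of Lo Hi x] between.hyps(4) that by blast
  obtain y0 t0 where y0: "x0 = y0 @ [t0]" "y0 \<in> X" "between Lo Hi y0 t0"
    using between.prems(4) by (rule Sigma_snocE)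
  have pu: "purely_unbounded k X"
    using between.prems(1) fibre by (rule purely_unbounded_Sigma_snoc_base)
  have "wide_fibres ?K"
    using between.prems(1) not_is_graph_Sigma_between[OF y0(2,3)] by (rule purely_unbounded_wide_fibres)
  then have "a = 0"
    by (rule sm_zero_if_bounded_on_wide_fibres[where lo = B1 and hi = B2 and b = f0]) (simp add: bounded)
  have "\<forall>x\<in>X. B1 \<le> f0 x \<and> f0 x \<le> B2"
    using bounded fibre \<open>a = 0\<close> by fastforce
  with between.IH[OF pu f0 _ y0(2)] have const: "\<forall>x\<in>X. f0 x = f0 y0"
    by blast
  show ?case
    unfolding ball_Sigma_snoc
  proof (intro ballI allI impI)
    fix x t
    assume "x \<in> X"
    with fX[OF this] fX[OF y0(2)] y0(1) \<open>a = 0\<close> const show "f (x @ [t]) = f x0"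
      by simp
  qed
qed simp

lemma affine_fibre_inf:
  assumes X: "linear_cell sm k X" and Lo: "pred_option (affine_fun k) Lo" and Hi: "pred_option (affine_fun k) Hi"
    and ord: "\<forall>x\<in>X. bounds_ordered Lo Hi x" and f0: "affine_fun k f0"
    and lower: "\<And>x t. x \<in> X \<Longrightarrow> between Lo Hi x t \<Longrightarrow> b \<le> f0 x + sm a t"
  shows "\<exists>h. affine_fun k h \<and> (\<forall>x\<in>X. is_inf {f0 x + sm a t | t. between Lo Hi x t} (h x))"
proof (cases "a = 0")
  case True
  have "is_inf {f0 x + sm a t | t. between Lo Hi x t} (f0 x)" if x: "x \<in> X" for x
  proof -
    obtain t where "between Lo Hi x t"
      using between_exists[of Lo Hi x] ord x by blast
    with True have "{f0 x + sm a t | t. between Lo Hi x t} = {f0 x}"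
      by auto
    then show ?thesis
      by (simp add: is_inf_def)
  qed
  with f0 show ?thesis
    by blast
next
  case False
  show ?thesis
  proof (cases "if 0 < a then Lo else Hi")
    case None
    obtain x where x: "x \<in> X"
      using linear_cell_nonempty[OF X] by blast
    with ord obtain t where "between Lo Hi x t" "f0 x + sm a t < b"
      using between_sm_unbounded_below[OF False _ None, of x "f0 x" b] by blast
    with lower[OF x] show ?thesis
      by (simp add: not_le[symmetric])
  next
    case (Some e)
    with Lo Hi have "affine_fun k e"
      by (cases "0 < a") simp_all
    with f0 have "affine_fun k (\<lambda>x. f0 x + sm a (e x))"
      by (intro affine_fun_add affine_fun_scale)
    moreover have "is_inf {f0 x + sm a t | t. between Lo Hi x t} (f0 x + sm a (e x))" if "x \<in> X" for x
      using is_inf_sm_between[OF False _, of Lo Hi x e "f0 x"] ord that Some by simp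
    ultimately show ?thesis
      by blast
  qed
qed

lemma affine_has_inf_on_cell:
  assumes "linear_cell sm k K" "affine_fun k f" "\<forall>x\<in>K. b \<le> f x"
  shows "\<exists>c. is_inf (f ` K) c"
  using assms
proof (induction arbitrary: f b rule: linear_cell_affine_induct)
  case Nil
  then show ?case
    by (intro exI[of _ "f []"]) (simp add: is_inf_def)
next
  case (graph k X g)
  have "\<forall>x\<in>X. b \<le> f (x @ [g x])"
    using graph.prems(2) by (simp add: Sigma_snoc_graph)
  then show ?case
    using graph.IH[OF affine_fun_graph_subst[OF graph.prems(1) graph.hyps(2)]] by (simp add: Sigma_snoc_graph image_image)
next
  case (between k X Lo Hi)
  obtain f0 a where f0: "affine_fun k f0" and fX: "\<And>x t. x \<in> X \<Longrightarrow> f (x @ [t]) = f0 x + sm a t"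
    by (rule affine_fun_on_Sigma_snoc[OF between.hyps(1) between.prems(1)]) (rule that)
  let ?S = "\<lambda>x. {f0 x + sm a t | t. between Lo Hi x t}"
  have img: "f ` Sigma_snoc X (between Lo Hi) = (\<Union>x\<in>X. ?S x)"
    using fX by (rule image_Sigma_snoc)
  have lower: "b \<le> f0 x + sm a t" if "x \<in> X" "between Lo Hi x t" for x t
    using between.prems(2) that fX unfolding ball_Sigma_snoc by auto
  obtain h where h: "affine_fun k h" "\<And>x. x \<in> X \<Longrightarrow> is_inf (?S x) (h x)"
    using affine_fibre_inf[OF between.hyps(1-4) f0 lower] by blast
  have "b \<le> h x" if x: "x \<in> X" for x
    using is_inf_greatest[OF h(2)[OF x]] lower[OF x] by blast
  then obtain c where "is_inf (h ` X) c"
    using between.IH[OF h(1)] by blast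
  then have "is_inf (\<Union>x\<in>X. ?S x) c"
    using h(2) by (rule is_inf_UN)
  with img show ?case
    by auto
qed

lemma affine_nonneg_on_cell_cases:
  assumes "linear_cell sm k K" "affine_fun k f" "\<forall>x\<in>K. 0 \<le> f x"
  shows "(\<forall>x\<in>K. f x = 0) \<or> (\<forall>x\<in>K. 0 < f x)"
proof (cases "\<exists>x1\<in>K. f x1 = 0")
  case True
  then obtain x1 where "x1 \<in> K" "f x1 = 0"
    by blast
  with assms have "\<forall>x\<in>K. f x = f x1"
    by (intro affine_min_on_cell_const) simp_all
  with \<open>f x1 = 0\<close> show ?thesis
    by simp
next
  case False
  with assms(3) show ?thesis
    by (auto simp: order.order_iff_strict)
qed

lemma affine_unbounded_if_inf_not_attained:
  assumes "linear_cell sm k J" "purely_unbounded k J" "affine_fun k p"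
    and "is_inf (p ` J) c" "\<forall>g\<in>J. c < p g"
  shows "\<exists>g\<in>J. B < p g"
proof (rule ccontr)
  obtain g0 where g0: "g0 \<in> J"
    using linear_cell_nonempty[OF assms(1)] by blast
  assume "\<not> (\<exists>g\<in>J. B < p g)"
  with assms(5) have "\<forall>g\<in>J. c \<le> p g \<and> p g \<le> B"
    by (auto simp: not_less less_imp_le)
  then have "\<forall>g\<in>J. p g = p g0"
    using affine_bounded_on_pu_cell_const[OF assms(1-3) _ g0] by blast
  moreover obtain g where "g \<in> J" "p g < p g0"
    using assms(4,5) g0 unfolding is_inf_def by blast
  ultimately show False
    by simp
qed

(* c is the infimum of p on J. *)
lemma affine_sum_pos_split:
  assumes J: "linear_cell sm k J" "purely_unbounded k J" and D: "linear_cell sm k D"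
    and p: "affine_fun k p" and q: "affine_fun k q" and pos: "\<forall>g\<in>J. \<forall>d\<in>D. 0 < p g + q d"
  obtains c where "\<forall>g\<in>J. p g = c" "\<forall>d\<in>D. 0 < c + q d"
    | c where "\<forall>g\<in>J. c < p g" "\<forall>B. \<exists>g\<in>J. B < p g" "\<forall>d\<in>D. c + q d = 0"
    | c where "\<forall>g\<in>J. c < p g" "\<forall>B. \<exists>g\<in>J. B < p g" "\<forall>d\<in>D. 0 < c + q d"
proof -
  obtain d0 where "d0 \<in> D"
    using linear_cell_nonempty[OF D] by blast
  with pos have "- q d0 \<le> p g" if "g \<in> J" for g
    using that add_less_cancel_right[of "- q d0" "q d0" "p g"] by simp
  then obtain c where inf: "is_inf (p ` J) c"
    using affine_has_inf_on_cell[OF J(1) p] by blast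
  then have c_le: "\<forall>g\<in>J. c \<le> p g"
    unfolding is_inf_def by blast
  have nonneg: "\<forall>d\<in>D. 0 \<le> c + q d"
    using is_inf_sum_nonneg[OF inf pos] by blast
  show ?thesis
  proof (cases "\<exists>g1\<in>J. p g1 = c")
    case True
    then obtain g1 where g1: "g1 \<in> J" "p g1 = c"
      by blast
    with c_le have "\<forall>g\<in>J. p g = c"
      using affine_min_on_cell_const[OF J(1) p g1(1)] by simp
    moreover have "\<forall>d\<in>D. 0 < c + q d"
      using pos g1(1) by (simp add: g1(2)[symmetric])
    ultimately show ?thesis
      by (rule that(1))
  next
    case False
    with c_le have above: "\<forall>g\<in>J. c < p g"
      by (auto simp: order.order_iff_strict)
    then have "\<forall>B. \<exists>g\<in>J. B < p g"
      using affine_unbounded_if_inf_not_attained[OF J p inf] by blast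
    moreover have "(\<forall>d\<in>D. c + q d = 0) \<or> (\<forall>d\<in>D. 0 < c + q d)"
      using D affine_fun_add[OF affine_fun_const q] nonneg by (rule affine_nonneg_on_cell_cases)
    ultimately show ?thesis
      using above that(2,3) by blast
  qed
qed

section \<open>Partitioning a cylinder over a product cell\<close>

lemma purely_unbounded_Sigma_between:
  fixes J :: "'m list set"
  assumes "purely_unbounded k J" "\<And>g. g \<in> J \<Longrightarrow> length g = k"
    and "\<forall>g\<in>J. bounds_ordered Lo Hi g" "wide_fibres (Sigma_snoc J (between Lo Hi))"
  shows "purely_unbounded (Suc k) (Sigma_snoc J (between Lo Hi))"
proof (rule purely_unbounded_Sigma_wide[OF assms(1,2)])
  show "\<exists>t. between Lo Hi g t" if "g \<in> J" for g
    using between_exists[of Lo Hi g] assms(3) that by blast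
  show "is_graph (Sigma_snoc J (between Lo Hi)) \<or> wide_fibres (Sigma_snoc J (between Lo Hi))"
    using assms(4) by (rule disjI2)
qed

lemma wide_fibres_Sigma_ray:
  fixes X :: "'m list set"
  assumes "X \<noteq> {}" "\<forall>x\<in>X. bounds_ordered Lo Hi x" "Lo = None \<or> Hi = None"
  shows "wide_fibres (Sigma_snoc X (between Lo Hi))"
  unfolding wide_fibres_def
proof (intro allI impI)
  fix N :: 'm
  obtain x where x: "x \<in> X"
    using assms(1) by blast
  with assms(2) have ord: "bounds_ordered Lo Hi x"
    by blast
  from assms(3) obtain s1 s2 where "between Lo Hi x s1" "between Lo Hi x s2" "s1 + N < s2"
  proof (elim disjE)
    assume "Lo = None"
    obtain s2 where "between Lo Hi x s2"
      using between_exists[OF ord] by blast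
    moreover obtain s1 where "between Lo Hi x s1" "s1 < s2 - N"
      using between_exists_below[OF ord, of "s2 - N"] \<open>Lo = None\<close> by auto
    ultimately show ?thesis
      using that by (simp add: less_diff_eq)
  next
    assume "Hi = None"
    obtain s1 where "between Lo Hi x s1"
      using between_exists[OF ord] by blast
    moreover obtain s2 where "between Lo Hi x s2" "s1 + N < s2"
      using between_exists_above[OF ord, of "s1 + N"] \<open>Hi = None\<close> by auto
    ultimately show ?thesis
      by (rule that)
  qed
  with x show "\<exists>y s1 s2. y @ [s1] \<in> Sigma_snoc X (between Lo Hi) \<and> y @ [s2] \<in> Sigma_snoc X (between Lo Hi) \<and> s1 + N < s2"
    by auto
qed

lemma affine_product_cell_band_plus_graph:
  assumes pd: "product_decomposition k A J D G" and A: "linear_cell sm k A"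
    and Lo: "pred_option (affine_fun k) Lo" and Hi: "pred_option (affine_fun k) Hi"
    and ord: "\<forall>g\<in>J. bounds_ordered Lo Hi g" and wide: "wide_fibres (Sigma_snoc J (between Lo Hi))"
    and \<delta>: "affine_fun k \<delta>"
  shows "affine_product_cell (Suc k) (Sigma_snoc A (\<lambda>x t. between Lo Hi (G x) (t - \<delta> (map2 (-) x (G x)))))"
proof -
  from pd have J: "linear_cell sm k J" "purely_unbounded k J" and D: "linear_cell sm k D" "bounded_set k D"
    and A_eq: "A = msum J D" and proj: "affine_projection k J D G"
    unfolding product_decomposition_def by blast+
  then have lenJ: "\<And>g. g \<in> J \<Longrightarrow> length g = k" and G: "affine_map k G"
    unfolding affine_projection_def by blast+
  let ?S = "\<lambda>y. last y - \<delta> (map2 (-) (butlast y) (G (butlast y)))"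
  let ?A' = "Sigma_snoc A (\<lambda>x t. between Lo Hi (G x) (t - \<delta> (map2 (-) x (G x))))"
  have "affine_projection (Suc k) (Sigma_snoc J (between Lo Hi)) (Sigma_snoc D (\<lambda>d s. s = \<delta> d))
      (\<lambda>y. G (butlast y) @ [?S y])"
  proof (rule affine_projection_Sigma_snoc[OF proj])
    show "affine_fun (Suc k) ?S"
      using affine_fun_last affine_fun_butlast[OF affine_fun_comp[OF \<delta> affine_map_diff_id[OF G]]]
      by (rule affine_fun_diff)
    fix g d s s'
    assume "g \<in> J" "d \<in> D" "s' = \<delta> d"
    with proj show "?S (map2 (+) g d @ [s + s']) = s"
      unfolding affine_projection_def by (simp add: map2_add_diff_cancel)
  qed
  moreover have "msum (Sigma_snoc J (between Lo Hi)) (Sigma_snoc D (\<lambda>d s. s = \<delta> d)) = ?A'"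
    unfolding msum_Sigma_snoc[OF proj] A_eq[symmetric]
    by (rule Sigma_snoc_cong) (simp add: ex_add_right_eq_iff)
  moreover have "linear_cell sm (Suc k) ?A'"
  proof (rule linear_cell_Sigma_between_shift[OF A G _ Lo Hi])
    show "affine_fun k (\<lambda>x. \<delta> (map2 (-) x (G x)))"
      using \<delta> affine_map_diff_id[OF G] by (rule affine_fun_comp)
    show "\<forall>x\<in>A. bounds_ordered Lo Hi (G x)"
      using ord affine_projection_msum(1)[OF proj] A_eq by blast
  qed
  ultimately show ?thesis
    unfolding affine_product_cell_def product_decomposition_def
    using linear_cell_Sigma_between[OF J(1) Lo Hi ord] purely_unbounded_Sigma_between[OF J(2) lenJ ord wide]
      linear_cell_Sigma_graph[OF D(1) \<delta>] bounded_set_Sigma_graph[OF D(2) \<delta>]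
    by blast
qed

lemma affine_product_cell_graph_plus:
  assumes pd: "product_decomposition k A J D G" and \<gamma>: "affine_fun k \<gamma>"
    and D': "linear_cell sm (Suc k) (Sigma_snoc D P)" "bounded_set (Suc k) (Sigma_snoc D P)"
    and A': "linear_cell sm (Suc k) (Sigma_snoc A (\<lambda>x t. P (map2 (-) x (G x)) (t - \<gamma> (G x))))"
  shows "affine_product_cell (Suc k) (Sigma_snoc A (\<lambda>x t. P (map2 (-) x (G x)) (t - \<gamma> (G x))))"
proof -
  from pd have J: "linear_cell sm k J" "purely_unbounded k J"
    and A_eq: "A = msum J D" and proj: "affine_projection k J D G"
    unfolding product_decomposition_def by blast+
  then have lenJ: "\<And>g. g \<in> J \<Longrightarrow> length g = k" and G: "affine_map k G"
    unfolding affine_projection_def by blast+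
  let ?PJ = "\<lambda>g s. s = \<gamma> g"
  have "linear_cell sm (Suc k) (Sigma_snoc J ?PJ)"
    using J(1) \<gamma> by (rule linear_cell_Sigma_graph)
  moreover have "purely_unbounded (Suc k) (Sigma_snoc J ?PJ)"
    using J(2) lenJ by (rule purely_unbounded_Sigma_graph)
  moreover have "affine_projection (Suc k) (Sigma_snoc J ?PJ) (Sigma_snoc D P) (\<lambda>y. G (butlast y) @ [\<gamma> (G (butlast y))])"
  proof (rule affine_projection_Sigma_snoc[OF proj])
    show "affine_fun (Suc k) (\<lambda>y. \<gamma> (G (butlast y)))"
      using affine_fun_comp[OF \<gamma> G] by (rule affine_fun_butlast)
    fix g d s s'
    assume "g \<in> J" "d \<in> D" "?PJ g s"
    with proj show "\<gamma> (G (butlast (map2 (+) g d @ [s + s']))) = s"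
      unfolding affine_projection_def by simp
  qed
  moreover have "msum (Sigma_snoc J ?PJ) (Sigma_snoc D P) = Sigma_snoc A (\<lambda>x t. P (map2 (-) x (G x)) (t - \<gamma> (G x)))"
    unfolding msum_Sigma_snoc[OF proj] A_eq[symmetric]
    by (rule Sigma_snoc_cong) (simp add: ex_add_left_eq_iff)
  ultimately have "product_decomposition (Suc k) (Sigma_snoc A (\<lambda>x t. P (map2 (-) x (G x)) (t - \<gamma> (G x))))
      (Sigma_snoc J ?PJ) (Sigma_snoc D P) (\<lambda>y. G (butlast y) @ [\<gamma> (G (butlast y))])"
    using D' unfolding product_decomposition_def by blast
  with A' show ?thesis
    unfolding affine_product_cell_def by blast
qed

lemma affine_product_cell_graph_plus_graph:
  assumes pd: "product_decomposition k A J D G" and A: "linear_cell sm k A"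
    and \<gamma>: "affine_fun k \<gamma>" and \<delta>: "affine_fun k \<delta>"
  shows "affine_product_cell (Suc k) (Sigma_snoc A (\<lambda>x t. t = \<gamma> (G x) + \<delta> (map2 (-) x (G x))))"
proof -
  from pd have D: "linear_cell sm k D" "bounded_set k D" and G: "affine_map k G"
    unfolding product_decomposition_def affine_projection_def by blast+
  have eq: "Sigma_snoc A (\<lambda>x t. t = \<gamma> (G x) + \<delta> (map2 (-) x (G x))) =
      Sigma_snoc A (\<lambda>x t. t - \<gamma> (G x) = \<delta> (map2 (-) x (G x)))"
    by (rule Sigma_snoc_cong) (auto simp: algebra_simps)
  have "affine_fun k (\<lambda>x. \<gamma> (G x) + \<delta> (map2 (-) x (G x)))"
    using G \<gamma> affine_fun_comp[OF \<delta> affine_map_diff_id[OF G]] by (rule affine_fun_shift)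
  with A have "linear_cell sm (Suc k) (Sigma_snoc A (\<lambda>x t. t = \<gamma> (G x) + \<delta> (map2 (-) x (G x))))"
    by (rule linear_cell_Sigma_graph)
  with eq have "affine_product_cell (Suc k) (Sigma_snoc A (\<lambda>x t. t - \<gamma> (G x) = \<delta> (map2 (-) x (G x))))"
    using linear_cell_Sigma_graph[OF D(1) \<delta>] bounded_set_Sigma_graph[OF D(2) \<delta>]
    by (intro affine_product_cell_graph_plus[OF pd \<gamma>]) simp_all
  with eq show ?thesis
    by simp
qed

lemma affine_product_cell_graph_plus_band:
  assumes pd: "product_decomposition k A J D G" and A: "linear_cell sm k A"
    and \<gamma>: "affine_fun k \<gamma>" and \<alpha>: "affine_fun k \<alpha>" and \<beta>: "affine_fun k \<beta>"
    and ord: "\<forall>d\<in>D. \<alpha> d < \<beta> d"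
  shows "affine_product_cell (Suc k)
    (Sigma_snoc A (\<lambda>x t. between (Some \<alpha>) (Some \<beta>) (map2 (-) x (G x)) (t - \<gamma> (G x))))"
proof (rule affine_product_cell_graph_plus[OF pd \<gamma>])
  from pd have D: "linear_cell sm k D" "bounded_set k D" and A_eq: "A = msum J D"
    and proj: "affine_projection k J D G" and G: "affine_map k G"
    unfolding product_decomposition_def affine_projection_def by blast+
  show "linear_cell sm (Suc k) (Sigma_snoc D (between (Some \<alpha>) (Some \<beta>)))"
    using D(1) \<alpha> \<beta> ord by (intro linear_cell_Sigma_between) (simp_all add: bounds_ordered_def)
  show "bounded_set (Suc k) (Sigma_snoc D (between (Some \<alpha>) (Some \<beta>)))"
    using D(2) \<alpha> \<beta> by (rule bounded_set_Sigma_between)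
  show "linear_cell sm (Suc k) (Sigma_snoc A (\<lambda>x t. between (Some \<alpha>) (Some \<beta>) (map2 (-) x (G x)) (t - \<gamma> (G x))))"
  proof (rule linear_cell_Sigma_between_shift[OF A affine_map_diff_id[OF G]])
    show "affine_fun k (\<lambda>x. \<gamma> (G x))"
      using \<gamma> G by (rule affine_fun_comp)
    show "\<forall>x\<in>A. bounds_ordered (Some \<alpha>) (Some \<beta>) (map2 (-) x (G x))"
      using ord affine_projection_msum(2)[OF proj] A_eq by (simp add: bounds_ordered_def)
  qed (use \<alpha> \<beta> in simp_all)
qed

lemma affine_product_cell_Sigma_graph:
  assumes "affine_product_cell k A" "affine_fun k f"
  shows "affine_product_cell (Suc k) (Sigma_snoc A (\<lambda>x t. t = f x))"
proof -
  from assms(1) obtain J D G where A: "linear_cell sm k A" and pd: "product_decomposition k A J D G"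
    unfolding affine_product_cell_def by blast
  then have proj: "affine_projection k J D G" and A_eq: "A = msum J D"
    unfolding product_decomposition_def by blast+
  have "affine_product_cell (Suc k) (Sigma_snoc A (\<lambda>x t. t = linear_part k f (G x) + f (map2 (-) x (G x))))"
    using pd A affine_fun_linear_part[OF assms(2)] assms(2) by (rule affine_product_cell_graph_plus_graph)
  moreover have "Sigma_snoc A (\<lambda>x t. t = linear_part k f (G x) + f (map2 (-) x (G x))) = Sigma_snoc A (\<lambda>x t. t = f x)"
    using affine_projection_split[OF proj _ assms(2)] A_eq by (intro Sigma_snoc_cong) simp
  ultimately show ?thesis
    by simp
qed

lemma affine_product_cell_Sigma_ray:
  assumes "affine_product_cell k A" "pred_option (affine_fun k) Lo" "pred_option (affine_fun k) Hi"
    and ray: "Lo = None \<or> Hi = None"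
  shows "affine_product_cell (Suc k) (Sigma_snoc A (between Lo Hi))"
proof -
  from assms(1) obtain J D G where A: "linear_cell sm k A" and pd: "product_decomposition k A J D G"
    unfolding affine_product_cell_def by blast
  then have J: "linear_cell sm k J" and proj: "affine_projection k J D G" and A_eq: "A = msum J D"
    unfolding product_decomposition_def by blast+
  obtain \<delta> where \<delta>: "affine_fun k \<delta>" and same: "\<And>f. f \<in> set_option Lo \<union> set_option Hi \<Longrightarrow> f = \<delta>"
  proof (cases Lo)
    case None
    with assms(3) show ?thesis
      using that affine_fun_const by (cases Hi) auto
  next
    case (Some l)
    with assms(2) ray that show ?thesis
      by auto
  qed
  let ?Lo = "map_option (linear_part k) Lo" and ?Hi = "map_option (linear_part k) Hi"
  have "affine_product_cell (Suc k) (Sigma_snoc A (\<lambda>x t. between ?Lo ?Hi (G x) (t - \<delta> (map2 (-) x (G x)))))"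
  proof (rule affine_product_cell_band_plus_graph[OF pd A _ _ _ _ \<delta>])
    show "pred_option (affine_fun k) ?Lo" "pred_option (affine_fun k) ?Hi"
      using assms(2,3) by (cases Lo; cases Hi; simp add: affine_fun_linear_part)+
    show ord: "\<forall>g\<in>J. bounds_ordered ?Lo ?Hi g"
      using ray by (auto simp: bounds_ordered_def)
    show "wide_fibres (Sigma_snoc J (between ?Lo ?Hi))"
      using linear_cell_nonempty[OF J] ord ray by (intro wide_fibres_Sigma_ray) auto
  qed
  moreover have "Sigma_snoc A (\<lambda>x t. between ?Lo ?Hi (G x) (t - \<delta> (map2 (-) x (G x)))) = Sigma_snoc A (between Lo Hi)"
  proof (rule Sigma_snoc_cong)
    fix x t
    assume "x \<in> A"
    with A_eq \<delta> same have "f x = linear_part k f (G x) + \<delta> (map2 (-) x (G x))"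
      if "f \<in> set_option Lo \<union> set_option Hi" for f
      using affine_projection_split[OF proj, of x \<delta>] that by auto
    then show "between ?Lo ?Hi (G x) (t - \<delta> (map2 (-) x (G x))) \<longleftrightarrow> between Lo Hi x t"
      by (cases Lo; cases Hi) (auto simp: between_def less_diff_eq diff_less_eq)
  qed
  ultimately show ?thesis
    by simp
qed

lemma product_decomposition_band_width:
  assumes pd: "product_decomposition k A J D G" and f1: "affine_fun k f1" and f2: "affine_fun k f2"
    and lt: "\<forall>x\<in>A. f1 x < f2 x"
  shows "\<forall>g\<in>J. \<forall>d\<in>D. 0 < (linear_part k f2 g - linear_part k f1 g) + (f2 d - f1 d)"
proof (intro ballI)
  from pd have proj: "affine_projection k J D G" and A_eq: "A = msum J D"
    unfolding product_decomposition_def by blast+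
  fix g d
  assume "g \<in> J" "d \<in> D"
  with proj A_eq have x: "map2 (+) g d \<in> A" and "G (map2 (+) g d) = g" "map2 (-) (map2 (+) g d) g = d"
    unfolding affine_projection_def msum_def by (auto simp: map2_add_diff_cancel)
  with affine_projection_split[OF proj _ f1] affine_projection_split[OF proj _ f2] A_eq
  have "f1 (map2 (+) g d) = linear_part k f1 g + f1 d" "f2 (map2 (+) g d) = linear_part k f2 g + f2 d"
    by simp_all
  with bspec[OF lt x] show "0 < (linear_part k f2 g - linear_part k f1 g) + (f2 d - f1 d)"
    by (simp add: algebra_simps)
qed

lemma affine_product_cell_Sigma_band_attained:
  assumes pd: "product_decomposition k A J D G" and A: "linear_cell sm k A"
    and f1: "affine_fun k f1" and f2: "affine_fun k f2"
    and c: "\<forall>g\<in>J. linear_part k f2 g - linear_part k f1 g = c" and ord: "\<forall>d\<in>D. f1 d < f2 d + c"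
  shows "affine_product_cell (Suc k) (Sigma_snoc A (between (Some f1) (Some f2)))"
proof -
  from pd have proj: "affine_projection k J D G" and A_eq: "A = msum J D"
    unfolding product_decomposition_def by blast+
  let ?A' = "Sigma_snoc A (\<lambda>x t. between (Some f1) (Some (\<lambda>d. f2 d + c)) (map2 (-) x (G x)) (t - linear_part k f1 (G x)))"
  have "affine_product_cell (Suc k) ?A'"
    using pd A affine_fun_linear_part[OF f1] f1 affine_fun_add[OF f2 affine_fun_const] ord
    by (rule affine_product_cell_graph_plus_band)
  moreover have "?A' = Sigma_snoc A (between (Some f1) (Some f2))"
  proof (rule Sigma_snoc_cong)
    fix x t
    assume "x \<in> A"
    with A_eq c affine_projection_msum(1)[OF proj] have "linear_part k f2 (G x) = linear_part k f1 (G x) + c"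
      by (metis add.commute diff_add_cancel)
    with \<open>x \<in> A\<close> A_eq affine_projection_split[OF proj _ f1] affine_projection_split[OF proj _ f2]
    show "between (Some f1) (Some (\<lambda>d. f2 d + c)) (map2 (-) x (G x)) (t - linear_part k f1 (G x)) \<longleftrightarrow>
        between (Some f1) (Some f2) x t"
      by (simp add: between_def algebra_simps)
  qed
  ultimately show ?thesis
    by simp
qed

lemma affine_product_cell_Sigma_band_wide:
  assumes pd: "product_decomposition k A J D G" and A: "linear_cell sm k A"
    and f1: "affine_fun k f1" and f2: "affine_fun k f2"
    and above: "\<forall>g\<in>J. c < linear_part k f2 g - linear_part k f1 g"
    and unbounded: "\<forall>B. \<exists>g\<in>J. B < linear_part k f2 g - linear_part k f1 g"
    and u: "\<And>x. x \<in> A \<Longrightarrow> u x = linear_part k f2 (G x) - c + f1 (map2 (-) x (G x))"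
  shows "affine_product_cell (Suc k) (Sigma_snoc A (between (Some f1) (Some u)))"
proof -
  from pd have proj: "affine_projection k J D G" and A_eq: "A = msum J D"
    unfolding product_decomposition_def by blast+
  let ?l = "linear_part k f1" and ?u = "\<lambda>g. linear_part k f2 g - c"
  have "affine_product_cell (Suc k) (Sigma_snoc A (\<lambda>x t. between (Some ?l) (Some ?u) (G x) (t - f1 (map2 (-) x (G x)))))"
  proof (rule affine_product_cell_band_plus_graph[OF pd A _ _ _ _ f1])
    show "pred_option (affine_fun k) (Some ?l)" "pred_option (affine_fun k) (Some ?u)"
      using affine_fun_linear_part[OF f1] affine_fun_diff[OF affine_fun_linear_part[OF f2] affine_fun_const]
      by simp_all
    show "\<forall>g\<in>J. bounds_ordered (Some ?l) (Some ?u) g"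
      using above by (simp add: bounds_ordered_def algebra_simps)
    have "\<exists>g\<in>J. N < ?u g - ?l g" for N
      using unbounded[rule_format, of "N + c"] by (simp add: algebra_simps)
    then show "wide_fibres (Sigma_snoc J (between (Some ?l) (Some ?u)))"
      by (rule wide_fibres_Sigma_between)
  qed
  moreover have "Sigma_snoc A (\<lambda>x t. between (Some ?l) (Some ?u) (G x) (t - f1 (map2 (-) x (G x)))) =
      Sigma_snoc A (between (Some f1) (Some u))"
  proof (rule Sigma_snoc_cong)
    fix x t
    assume x: "x \<in> A"
    then have "between (Some f1) (Some u) x t \<longleftrightarrow> f1 x < t \<and> t < linear_part k f2 (G x) - c + f1 (map2 (-) x (G x))"
      by (simp add: between_def u)
    with affine_projection_split[OF proj _ f1] x A_eq
    show "between (Some ?l) (Some ?u) (G x) (t - f1 (map2 (-) x (G x))) \<longleftrightarrow> between (Some f1) (Some u) x t"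
      by (simp add: between_def algebra_simps)
  qed
  ultimately show ?thesis
    by simp
qed

lemma affine_product_partition_Sigma_band_split:
  assumes pd: "product_decomposition k A J D G" and A: "linear_cell sm k A"
    and f1: "affine_fun k f1" and f2: "affine_fun k f2"
    and above: "\<forall>g\<in>J. c < linear_part k f2 g - linear_part k f1 g"
    and unbounded: "\<forall>B. \<exists>g\<in>J. B < linear_part k f2 g - linear_part k f1 g"
    and pos: "\<forall>d\<in>D. 0 < c + (f2 d - f1 d)"
  shows "\<exists>Q. partitions Q (Sigma_snoc A (between (Some f1) (Some f2))) \<and> (\<forall>B\<in>Q. affine_product_cell (Suc k) B)"
proof -
  from pd have proj: "affine_projection k J D G" and A_eq: "A = msum J D"
    unfolding product_decomposition_def by blast+
  let ?m = "\<lambda>x. linear_part k f2 (G x) - c + f1 (map2 (-) x (G x))"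
  have split: "f x = linear_part k f (G x) + f (map2 (-) x (G x))" if "x \<in> A" "affine_fun k f" for x f
    using affine_projection_split[OF proj _ that(2)] that(1) A_eq by simp
  have m: "\<forall>x\<in>A. f1 x < ?m x \<and> ?m x < f2 x"
  proof
    fix x
    assume x: "x \<in> A"
    with A_eq affine_projection_msum[OF proj] have "G x \<in> J" "map2 (-) x (G x) \<in> D"
      by simp_all
    with above pos have "c < linear_part k f2 (G x) - linear_part k f1 (G x)"
      "0 < c + (f2 (map2 (-) x (G x)) - f1 (map2 (-) x (G x)))"
      by simp_all
    with split[OF x f1] split[OF x f2] show "f1 x < ?m x \<and> ?m x < f2 x"
      by (simp add: algebra_simps)
  qed
  have "affine_product_cell (Suc k) (Sigma_snoc A (between (Some f1) (Some ?m)))"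
    by (rule affine_product_cell_Sigma_band_wide[OF pd A f1 f2 above unbounded]) simp
  moreover have "affine_product_cell (Suc k) (Sigma_snoc A (\<lambda>x t. t = ?m x))"
    using affine_product_cell_graph_plus_graph[OF pd A affine_fun_diff[OF affine_fun_linear_part[OF f2] affine_fun_const[of k c]] f1]
    by (simp add: diff_add_eq)
  moreover have "affine_product_cell (Suc k) (Sigma_snoc A (between (Some ?m) (Some f2)))"
  proof -
    have ord: "\<forall>d\<in>D. f1 d < f2 d + c"
      using pos by (simp add: algebra_simps)
    have "affine_product_cell (Suc k) (Sigma_snoc A (\<lambda>x t. between (Some f1) (Some (\<lambda>d. f2 d + c))
        (map2 (-) x (G x)) (t - (linear_part k f2 (G x) - c))))"
      using pd A affine_fun_diff[OF affine_fun_linear_part[OF f2] affine_fun_const[of k c]] f1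
        affine_fun_add[OF f2 affine_fun_const[of k c]] ord
      by (rule affine_product_cell_graph_plus_band)
    moreover have "\<dots> = Sigma_snoc A (between (Some ?m) (Some f2))"
      using split[OF _ f2] by (intro Sigma_snoc_cong) (simp add: between_def algebra_simps)
    ultimately show ?thesis
      by simp
  qed
  ultimately show ?thesis
    using partitions_Sigma_between_split[OF m]
    by (intro exI[of _ "{Sigma_snoc A (between (Some f1) (Some ?m)), Sigma_snoc A (\<lambda>x t. t = ?m x),
        Sigma_snoc A (between (Some ?m) (Some f2))}"]) simp
qed

lemma affine_product_partition_Sigma_band:
  assumes "affine_product_cell k A" and f1: "affine_fun k f1" and f2: "affine_fun k f2"
    and lt: "\<forall>x\<in>A. f1 x < f2 x"
  shows "\<exists>Q. partitions Q (Sigma_snoc A (between (Some f1) (Some f2))) \<and> (\<forall>B\<in>Q. affine_product_cell (Suc k) B)"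
proof -
  from assms(1) obtain J D G where A: "linear_cell sm k A" and pd: "product_decomposition k A J D G"
    unfolding affine_product_cell_def by blast
  then have J: "linear_cell sm k J" "purely_unbounded k J" and D: "linear_cell sm k D"
    and proj: "affine_projection k J D G" and A_eq: "A = msum J D"
    unfolding product_decomposition_def by blast+
  have p: "affine_fun k (\<lambda>g. linear_part k f2 g - linear_part k f1 g)"
    using affine_fun_linear_part[OF f2] affine_fun_linear_part[OF f1] by (rule affine_fun_diff)
  from affine_sum_pos_split[OF J D p affine_fun_diff[OF f2 f1] product_decomposition_band_width[OF pd f1 f2 lt]]
  show ?thesis
  proof cases
    case (1 c)
    then have "\<forall>d\<in>D. f1 d < f2 d + c"
      by (simp add: algebra_simps)
    with 1 have "affine_product_cell (Suc k) (Sigma_snoc A (between (Some f1) (Some f2)))"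
      by (intro affine_product_cell_Sigma_band_attained[OF pd A f1 f2]) simp_all
    then show ?thesis
      by (intro exI[of _ "{Sigma_snoc A (between (Some f1) (Some f2))}"]) (simp add: partitions_singleton)
  next
    case (2 c)
    have "f2 x = linear_part k f2 (G x) - c + f1 (map2 (-) x (G x))" if x: "x \<in> A" for x
    proof -
      from x A_eq 2(3) affine_projection_msum(2)[OF proj] have "f1 (map2 (-) x (G x)) = f2 (map2 (-) x (G x)) + c"
        by (simp add: algebra_simps)
      with affine_projection_split[OF proj _ f2] x A_eq show ?thesis
        by simp
    qed
    with 2(1,2) have "affine_product_cell (Suc k) (Sigma_snoc A (between (Some f1) (Some f2)))"
      by (intro affine_product_cell_Sigma_band_wide[OF pd A f1 f2]) simp_all
    then show ?thesis
      by (intro exI[of _ "{Sigma_snoc A (between (Some f1) (Some f2))}"]) (simp add: partitions_singleton)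
  next
    case (3 c)
    with pd A f1 f2 show ?thesis
      by (rule affine_product_partition_Sigma_band_split)
  qed
qed

lemma affine_product_partition_Sigma_between:
  assumes "affine_product_cell k A" "pred_option (affine_fun k) Lo" "pred_option (affine_fun k) Hi"
    and "\<forall>x\<in>A. bounds_ordered Lo Hi x"
  shows "\<exists>Q. partitions Q (Sigma_snoc A (between Lo Hi)) \<and> (\<forall>B\<in>Q. affine_product_cell (Suc k) B)"
proof (cases "Lo = None \<or> Hi = None")
  case True
  with assms(1-3) have "affine_product_cell (Suc k) (Sigma_snoc A (between Lo Hi))"
    by (rule affine_product_cell_Sigma_ray)
  then show ?thesis
    by (intro exI[of _ "{Sigma_snoc A (between Lo Hi)}"]) (simp add: partitions_singleton)
next
  case False
  then obtain f1 f2 where "Lo = Some f1" "Hi = Some f2"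
    by auto
  with assms show ?thesis
    using affine_product_partition_Sigma_band[of k A f1 f2] by (simp add: bounds_ordered_def)
qed

lemma linear_cell_affine_product_partition:
  "linear_cell sm n C \<Longrightarrow> \<exists>P. partitions P C \<and> (\<forall>A\<in>P. affine_product_cell n A)"
proof (induction rule: linear_cell_affine_induct)
  case Nil
  show ?case
    using partitions_singleton affine_product_cell_Nil by blast
next
  case (graph k X f)
  then obtain P where P: "partitions P X" "\<forall>A\<in>P. affine_product_cell k A"
    by blast
  have "\<forall>A\<in>P. \<exists>Q. partitions Q (Sigma_snoc A (\<lambda>x t. t = f x)) \<and> (\<forall>B\<in>Q. affine_product_cell (Suc k) B)"
  proof
    fix A
    assume "A \<in> P"
    with P(2) graph.hyps(2) have "affine_product_cell (Suc k) (Sigma_snoc A (\<lambda>x t. t = f x))"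
      by (blast intro: affine_product_cell_Sigma_graph)
    then show "\<exists>Q. partitions Q (Sigma_snoc A (\<lambda>x t. t = f x)) \<and> (\<forall>B\<in>Q. affine_product_cell (Suc k) B)"
      by (intro exI[of _ "{Sigma_snoc A (\<lambda>x t. t = f x)}"]) (simp add: partitions_singleton)
  qed
  with P(1) show ?case
    by (rule partitions_Sigma_snoc)
next
  case (between k X Lo Hi)
  then obtain P where P: "partitions P X" "\<forall>A\<in>P. affine_product_cell k A"
    by blast
  have "\<forall>A\<in>P. \<exists>Q. partitions Q (Sigma_snoc A (between Lo Hi)) \<and> (\<forall>B\<in>Q. affine_product_cell (Suc k) B)"
  proof
    fix A
    assume "A \<in> P"
    show "\<exists>Q. partitions Q (Sigma_snoc A (between Lo Hi)) \<and> (\<forall>B\<in>Q. affine_product_cell (Suc k) B)"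
    proof (rule affine_product_partition_Sigma_between)
      show "affine_product_cell k A"
        using P(2) \<open>A \<in> P\<close> by blast
      show "\<forall>x\<in>A. bounds_ordered Lo Hi x"
        using between.hyps(4) P(1) \<open>A \<in> P\<close> unfolding partitions_def by blast
    qed (use between.hyps(2,3) in blast)+
  qed
  with P(1) show ?case
    by (rule partitions_Sigma_snoc)
qed

end

lemma product_cell_zero_point:
  assumes "linear_cell sm n {replicate n (0::'m::linordered_ab_group_add)}"
  shows "product_cell sm n {replicate n 0}"
proof -
  have "map2 (+) (replicate n 0) (replicate n 0) = replicate n (0::'m)"
    by simp
  then have "msum {replicate n 0} {replicate n 0} = {replicate n (0::'m)}"
    unfolding msum_def by auto
  moreover have "bounded_set n {replicate n (0::'m)}"
    unfolding bounded_set_def by (intro conjI exI[of _ 0]) auto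
  ultimately show ?thesis
    unfolding product_cell_def using assms purely_unbounded_zero_point
    by (intro conjI exI[of _ "{replicate n 0}"]) (auto simp: prod_eq_iff)
qed

lemma linear_cell_partition_if_trivial:
  fixes sm :: "'k::{division_ring,linordered_ring_strict} \<Rightarrow> 'm::linordered_ab_group_add \<Rightarrow> 'm"
  assumes "\<And>x::'m. x = 0" and "linear_cell sm n C"
  shows "\<exists>P. partitions P C \<and> (\<forall>A\<in>P. product_cell sm n A)"
proof -
  have "x = replicate n 0" if "x \<in> C" for x
    using linear_cell_length[OF assms(2) that] by (simp add: list_eq_iff_nth_eq) (use assms(1) in blast)
  then have "C \<subseteq> {replicate n 0}"
    by blast
  then consider "C = {}" | "C = {replicate n 0}"
    by blast
  then show ?thesis
  proof cases
    case 1
    then show ?thesis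
      by (intro exI[of _ "{}"]) (simp add: partitions_def)
  next
    case 2
    with assms(2) show ?thesis
      using product_cell_zero_point partitions_singleton by blast
  qed
qed

theorem propositionA2:
  fixes sm :: "'k::{division_ring,linordered_ring_strict} \<Rightarrow> 'm::linordered_ab_group_add \<Rightarrow> 'm"
  assumes "ordered_vector_space sm"
    and "linear_cell sm n C"
  shows "\<exists>P. finite P \<and> \<Union>P = C \<and> (\<forall>A\<in>P. \<forall>B\<in>P. A \<noteq> B \<longrightarrow> A \<inter> B = {}) \<and>
             (\<forall>A\<in>P. product_cell sm n A)"
proof -
  have "\<exists>P. partitions P C \<and> (\<forall>A\<in>P. product_cell sm n A)"
  proof (cases "\<exists>e::'m. 0 < e")
    case True
    with assms(1) interpret nontrivial_ordered_vspace sm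
      by unfold_locales
    from linear_cell_affine_product_partition[OF assms(2)] show ?thesis
      using affine_product_cell_imp_product_cell by blast
  next
    case False
    then have "x = 0" for x :: 'm
      by (metis neg_0_less_iff_less not_less_iff_gr_or_eq)
    then show ?thesis
      using assms(2) by (rule linear_cell_partition_if_trivial)
  qed
  then show ?thesis
    unfolding partitions_def pairwise_def disjnt_def by blast
qed

end
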